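(* Let $X\subseteq\{1,\dots,n\}$, $x\in X$, and assume $n\geq 2$. Then the sequence of left $\mathcal P_n$-modules \[ 0\longrightarrow\mathcal A_{X,x}\oplus\mathcal B_{X,x}\longrightarrow\mathcal P_n/J_{X-\{x\}}\longrightarrow\mathcal P_n/J_X\longrightarrow 0, \] in which the first map is induced by the inclusions $A_x\subseteq\mathcal P_n$ and $B_{X,x}\subseteq\mathcal P_n$ and the second by the identity of $\mathcal P_n$, is exact (i.e. $\mathcal A_{X,x}\oplus\mathcal B_{X,x}\to\mathcal P_n/J_{X-\{x\}}$ is a resolution of $\mathcal P_n/J_X$). Moreover, applying $\mathbb 1\otimes_{\mathcal P_n}-$ gives a resolution of $\mathbb 1\otimes_{\mathcal P_n}\mathcal P_n/J_X$, i.e. the complex $\mathbb 1\otimes_{\mathcal P_n}(\mathcal A_{X,x}\oplus\mathcal B_{X,x})\to\mathbb 1\otimes_{\mathcal P_n}\mathcal P_n/J_{X-\{x\}}\to\mathbb 1\otimes_{\mathcal P_n}\mathcal P_n/J_X\to 0$ is exact with the leftmost map injective.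
   Context: $R$ is a commutative ring, $\delta\in R$, and $\mathcal P_n=\mathcal P_n(R,\delta)$ is the partition algebra: the free $R$-module on set partitions ("diagrams") of $\{-n,\dots,-1,1,\dots,n\}$ (negative = left nodes, positive = right nodes), with product by stacking (identifying right nodes of the first diagram with left nodes of the second), taking the induced partition on outer nodes, and multiplying by $\delta$ for each component consisting only of middle nodes. $\mathbb 1$ is the trivial right module $R$ on which permutation diagrams (all blocks of the form $\{-i,j\}$) act as the identity and other diagrams as $0$. For $Z\subseteq\{1,\dots,n\}$, $J_Z$ is the left ideal spanned by diagrams in which among the right nodes labelled by $Z$ there is a singleton block or two distinct nodes in the same block. $A_x$ is the span of diagrams in which the right node $x$ is a singleton; $B_{X,x}$ the span of diagrams in which $x$ is in the same block as another element of $X$; $\mathcal A_{X,x}=A_x/(A_x\cap J_{X-\{x\}})$ and $\mathcal B_{X,x}=B_{X,x}/(B_{X,x}\cap J_{X-\{x\}})$. *)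

theory Defs
  imports Main "HOL-Library.Disjoint_Sets" "HOL-Library.Function_Algebras" "HOL-Library.Product_Plus"
begin

text \<open>Nodes: -n..-1 (left nodes) and 1..n (right nodes), as integers.\<close>
definition pnodes :: "nat \<Rightarrow> int set" where
  "pnodes n = {i. 1 \<le> \<bar>i\<bar> \<and> \<bar>i\<bar> \<le> int n}"

definition diagrams :: "nat \<Rightarrow> int set set set" where
  "diagrams n = {d. partition_on (pnodes n) d}"

text \<open>Stacking d1 on top of d2: left nodes of d1 and right nodes of d2 become
  outer nodes (Inl v), right node j of d1 and left node -j of d2 become the
  middle node Inr j.\<close>
definition lift1 :: "int \<Rightarrow> int + int" where
  "lift1 v = (if v < 0 then Inl v else Inr v)"
definition lift2 :: "int \<Rightarrow> int + int" where
  "lift2 v = (if v < 0 then Inr (- v) else Inl v)"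

definition stack_blocks :: "int set set \<Rightarrow> int set set \<Rightarrow> (int + int) set set" where
  "stack_blocks d1 d2 = (image lift1) ` d1 \<union> (image lift2) ` d2"

definition stack_rel :: "int set set \<Rightarrow> int set set \<Rightarrow> ((int + int) \<times> (int + int)) set" where
  "stack_rel d1 d2 = {(a, b). \<exists>Bl \<in> stack_blocks d1 d2. a \<in> Bl \<and> b \<in> Bl}"

definition stack_nodes :: "nat \<Rightarrow> (int + int) set" where
  "stack_nodes n = Inl ` pnodes n \<union> Inr ` {1 .. int n}"

definition components :: "nat \<Rightarrow> int set set \<Rightarrow> int set set \<Rightarrow> (int + int) set set" where
  "components n d1 d2 = stack_nodes n // ((stack_rel d1 d2)\<^sup>*)"

definition compose :: "nat \<Rightarrow> int set set \<Rightarrow> int set set \<Rightarrow> int set set" where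
  "compose n d1 d2 = {Inl -` C | C. C \<in> components n d1 d2 \<and> C \<inter> range Inl \<noteq> {}}"

definition middle_count :: "nat \<Rightarrow> int set set \<Rightarrow> int set set \<Rightarrow> nat" where
  "middle_count n d1 d2 = card {C \<in> components n d1 d2. C \<subseteq> range Inr}"

definition PA :: "nat \<Rightarrow> (int set set \<Rightarrow> 'r::comm_ring_1) set" where
  "PA n = {f. \<forall>d. d \<notin> diagrams n \<longrightarrow> f d = 0}"

definition psmult :: "'r::comm_ring_1 \<Rightarrow> (int set set \<Rightarrow> 'r) \<Rightarrow> (int set set \<Rightarrow> 'r)" where
  "psmult r f = (\<lambda>d. r * f d)"

definition pmult :: "nat \<Rightarrow> 'r::comm_ring_1 \<Rightarrow> (int set set \<Rightarrow> 'r) \<Rightarrow> (int set set \<Rightarrow> 'r) \<Rightarrow> (int set set \<Rightarrow> 'r)" where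
  "pmult n \<delta> f g = (\<lambda>d. \<Sum>d1\<in>diagrams n. \<Sum>d2\<in>diagrams n.
      (if compose n d1 d2 = d then f d1 * g d2 * \<delta> ^ middle_count n d1 d2 else 0))"

definition span_of :: "nat \<Rightarrow> int set set set \<Rightarrow> (int set set \<Rightarrow> 'r::comm_ring_1) set" where
  "span_of n S = {f \<in> PA n. \<forall>d. d \<notin> S \<longrightarrow> f d = 0}"

definition left_submodule :: "nat \<Rightarrow> 'r::comm_ring_1 \<Rightarrow> (int set set \<Rightarrow> 'r) set \<Rightarrow> bool" where
  "left_submodule n \<delta> S \<longleftrightarrow> S \<subseteq> PA n \<and> 0 \<in> S \<and> (\<forall>u\<in>S. \<forall>v\<in>S. u + v \<in> S)
     \<and> (\<forall>r. \<forall>u\<in>S. psmult r u \<in> S) \<and> (\<forall>a\<in>PA n. \<forall>u\<in>S. pmult n \<delta> a u \<in> S)"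

definition Jdiags :: "nat \<Rightarrow> int set \<Rightarrow> int set set set" where
  "Jdiags n Z = {d \<in> diagrams n. (\<exists>z\<in>Z. {z} \<in> d) \<or>
      (\<exists>z1\<in>Z. \<exists>z2\<in>Z. z1 \<noteq> z2 \<and> (\<exists>Bl\<in>d. z1 \<in> Bl \<and> z2 \<in> Bl))}"

definition Jid :: "nat \<Rightarrow> int set \<Rightarrow> (int set set \<Rightarrow> 'r::comm_ring_1) set" where
  "Jid n Z = span_of n (Jdiags n Z)"

definition Amod :: "nat \<Rightarrow> int \<Rightarrow> (int set set \<Rightarrow> 'r::comm_ring_1) set" where
  "Amod n x = span_of n {d \<in> diagrams n. {x} \<in> d}"

definition Bmod :: "nat \<Rightarrow> int set \<Rightarrow> int \<Rightarrow> (int set set \<Rightarrow> 'r::comm_ring_1) set" where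
  "Bmod n X x = span_of n {d \<in> diagrams n. \<exists>y\<in>X. y \<noteq> x \<and> (\<exists>Bl\<in>d. x \<in> Bl \<and> y \<in> Bl)}"

definition coset :: "'m::ab_group_add set \<Rightarrow> 'm \<Rightarrow> 'm set" where
  "coset N m = (\<lambda>k. m + k) ` N"

text \<open>Quotient module M/N, as the set of cosets; its zero is the coset N.\<close>
definition quot :: "'m::ab_group_add set \<Rightarrow> 'm set \<Rightarrow> 'm set set" where
  "quot M N = coset N ` M"

definition induced :: "('m::ab_group_add \<Rightarrow> 'n::ab_group_add) \<Rightarrow> 'n set \<Rightarrow> 'm set \<Rightarrow> 'n set" where
  "induced g N2 C = coset N2 (g (SOME m. m \<in> C))"

definition setsum :: "'m::ab_group_add set \<Rightarrow> 'm set \<Rightarrow> 'm set" where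
  "setsum N K = {u + v | u v. u \<in> N \<and> v \<in> K}"

definition perm_diagram :: "nat \<Rightarrow> int set set \<Rightarrow> bool" where
  "perm_diagram n d \<longleftrightarrow> d \<in> diagrams n \<and>
     (\<forall>Bl\<in>d. \<exists>i j. 1 \<le> i \<and> i \<le> int n \<and> 1 \<le> j \<and> j \<le> int n \<and> Bl = {- i, j})"

text \<open>Action of P_n on the trivial right module R: r . a = r * eps a.\<close>
definition eps :: "nat \<Rightarrow> (int set set \<Rightarrow> 'r::comm_ring_1) \<Rightarrow> 'r" where
  "eps n f = (\<Sum>d\<in>{d. perm_diagram n d}. f d)"

text \<open>Balancing relations for 1 (x)_{P_n} M: the R-span (= additive span, since the
  set is closed under R-scalars) of all eps(a) m - a.m.\<close>
definition triv_rel :: "nat \<Rightarrow> ('r::comm_ring_1 \<Rightarrow> 'm \<Rightarrow> 'm::ab_group_add)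
     \<Rightarrow> ((int set set \<Rightarrow> 'r) \<Rightarrow> 'm \<Rightarrow> 'm) \<Rightarrow> 'm set \<Rightarrow> 'm set" where
  "triv_rel n sm act M = {(\<Sum>i<k. sm (eps n (a i)) (m i) - act (a i) (m i)) | (k::nat) a m.
      \<forall>i<k. a i \<in> PA n \<and> m i \<in> M}"

text \<open>1 (x)_{P_n} (M/N), realised as M/(N + balancing relations).\<close>
definition triv_tensor :: "nat \<Rightarrow> ('r::comm_ring_1 \<Rightarrow> 'm \<Rightarrow> 'm::ab_group_add)
     \<Rightarrow> ((int set set \<Rightarrow> 'r) \<Rightarrow> 'm \<Rightarrow> 'm) \<Rightarrow> 'm set \<Rightarrow> 'm set \<Rightarrow> 'm set" where
  "triv_tensor n sm act M N = setsum N (triv_rel n sm act M)"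

definition sm1 :: "'r::comm_ring_1 \<Rightarrow> (int set set \<Rightarrow> 'r) \<Rightarrow> (int set set \<Rightarrow> 'r)" where
  "sm1 = psmult"
definition sm2 :: "'r::comm_ring_1 \<Rightarrow> (int set set \<Rightarrow> 'r) \<times> (int set set \<Rightarrow> 'r)
     \<Rightarrow> (int set set \<Rightarrow> 'r) \<times> (int set set \<Rightarrow> 'r)" where
  "sm2 r p = (psmult r (fst p), psmult r (snd p))"
definition act2 :: "nat \<Rightarrow> 'r::comm_ring_1 \<Rightarrow> (int set set \<Rightarrow> 'r) \<Rightarrow> (int set set \<Rightarrow> 'r) \<times> (int set set \<Rightarrow> 'r)
     \<Rightarrow> (int set set \<Rightarrow> 'r) \<times> (int set set \<Rightarrow> 'r)" where
  "act2 n \<delta> a p = (pmult n \<delta> a (fst p), pmult n \<delta> a (snd p))"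

end

theory Submission
  imports Defs
begin

(*
  The diagrams spanning J_X are those spanning J_{X-{x}} together with those in which the
  right node x is a singleton (spanning A_x) or shares a block with another node of X
  (spanning B_{X,x}), and the last two families are disjoint. All these modules are spanned
  by families of diagrams that are stable under left multiplication, so exactness of the
  first sequence is bookkeeping on coefficients.

  Tensoring with the trivial module kills A_x and B_{X,x}: every diagram d spanning one of
  them satisfies d e = d for an idempotent diagram e of the same family that is not a
  permutation, so eps(e) = 0 and c d is a balancing relation. (For A_x, building e needs a
  second right node y, whence n >= 2.) Hence the tensored first term vanishes, the tensored
  second and third terms coincide, and the tensored sequence is trivially exact.
*)

section \<open>Diagrams and their composition\<close>

lemma mem_pnodes_iff: "v \<in> pnodes n \<longleftrightarrow> 1 \<le> \<bar>v\<bar> \<and> \<bar>v\<bar> \<le> int n"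
  by (simp add: pnodes_def)

lemma finite_pnodes: "finite (pnodes n)"
  by (rule finite_subset[of _ "{- int n .. int n}"]) (auto simp: pnodes_def)

lemma finite_diagrams: "finite (diagrams n)"
proof (rule finite_subset)
  show "diagrams n \<subseteq> {P. partition_on (pnodes n) P}"
    by (simp add: diagrams_def)
qed (simp add: finitely_many_partition_on finite_pnodes)

lemma diagram_block_subset: "d \<in> diagrams n \<Longrightarrow> Bl \<in> d \<Longrightarrow> Bl \<subseteq> pnodes n"
  by (auto simp: diagrams_def partition_on_def)

lemma diagram_block_exists: "d \<in> diagrams n \<Longrightarrow> v \<in> pnodes n \<Longrightarrow> \<exists>Bl\<in>d. v \<in> Bl"
  by (auto simp: diagrams_def partition_on_def)

lemma diagram_block_unique:
  "d \<in> diagrams n \<Longrightarrow> B1 \<in> d \<Longrightarrow> B2 \<in> d \<Longrightarrow> v \<in> B1 \<Longrightarrow> v \<in> B2 \<Longrightarrow> B1 = B2"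
  unfolding diagrams_def partition_on_def disjoint_def by blast

lemma diagram_block_nonempty: "d \<in> diagrams n \<Longrightarrow> Bl \<in> d \<Longrightarrow> Bl \<noteq> {}"
  by (auto simp: diagrams_def partition_on_def)

lemma Inl_mem_stack_nodes [simp]: "Inl v \<in> stack_nodes n \<longleftrightarrow> v \<in> pnodes n"
  by (auto simp: stack_nodes_def)

lemma Inr_mem_stack_nodes [simp]: "Inr i \<in> stack_nodes n \<longleftrightarrow> 1 \<le> i \<and> i \<le> int n"
  by (auto simp: stack_nodes_def)

lemma lift1_neg [simp]: "v < 0 \<Longrightarrow> lift1 v = Inl v"
  and lift1_pos [simp]: "v > 0 \<Longrightarrow> lift1 v = Inr v"
  and lift2_neg [simp]: "v < 0 \<Longrightarrow> lift2 v = Inr (- v)"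
  and lift2_pos [simp]: "v > 0 \<Longrightarrow> lift2 v = Inl v"
  by (simp_all add: lift1_def lift2_def)

lemma lift_mem_stack_nodes:
  "v \<in> pnodes n \<Longrightarrow> lift1 v \<in> stack_nodes n"
  "v \<in> pnodes n \<Longrightarrow> lift2 v \<in> stack_nodes n"
  by (auto simp: lift1_def lift2_def mem_pnodes_iff)

lemma stack_block_subset:
  assumes "d1 \<in> diagrams n" "d2 \<in> diagrams n" "Bl \<in> stack_blocks d1 d2"
  shows "Bl \<subseteq> stack_nodes n"
  using assms(3) unfolding stack_blocks_def
proof
  assume "Bl \<in> (`) lift1 ` d1"
  then show ?thesis
    using diagram_block_subset[OF assms(1)] lift_mem_stack_nodes(1) by blast
next
  assume "Bl \<in> (`) lift2 ` d2"
  then show ?thesis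
    using diagram_block_subset[OF assms(2)] lift_mem_stack_nodes(2) by blast
qed

lemma stack_connected_block:
  "Bl \<in> stack_blocks d1 d2 \<Longrightarrow> a \<in> Bl \<Longrightarrow> b \<in> Bl \<Longrightarrow> (a, b) \<in> (stack_rel d1 d2)\<^sup>*"
  unfolding stack_rel_def by blast

lemma stack_connected_left_block:
  "B \<in> d1 \<Longrightarrow> a \<in> lift1 ` B \<Longrightarrow> b \<in> lift1 ` B \<Longrightarrow> (a, b) \<in> (stack_rel d1 d2)\<^sup>*"
  by (rule stack_connected_block) (auto simp: stack_blocks_def)

lemma stack_connected_right_block:
  "B \<in> d2 \<Longrightarrow> a \<in> lift2 ` B \<Longrightarrow> b \<in> lift2 ` B \<Longrightarrow> (a, b) \<in> (stack_rel d1 d2)\<^sup>*"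
  by (rule stack_connected_block) (auto simp: stack_blocks_def)

lemma stack_connected_closed:
  assumes "d1 \<in> diagrams n" "d2 \<in> diagrams n"
    and "(a, b) \<in> (stack_rel d1 d2)\<^sup>*" "a \<in> stack_nodes n"
  shows "b \<in> stack_nodes n"
  using assms(3,4)
proof (induction rule: rtrancl_induct)
  case (step b c)
  then show ?case
    using stack_block_subset[OF assms(1,2)] unfolding stack_rel_def by blast
qed

lemma equiv_stack_connected:
  "equiv UNIV ((stack_rel d1 d2)\<^sup>*)"
proof -
  have "sym (stack_rel d1 d2)"
    unfolding stack_rel_def sym_def by blast
  then show ?thesis
    by (intro equivI) (auto simp: refl_on_def sym_rtrancl trans_rtrancl)
qed

lemma stack_connected_sym:
  "(a, b) \<in> (stack_rel d1 d2)\<^sup>* \<Longrightarrow> (b, a) \<in> (stack_rel d1 d2)\<^sup>*"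
  using equiv_stack_connected by (metis equivE symD)

lemma components_eq_quotient:
  assumes "d1 \<in> diagrams n" "d2 \<in> diagrams n"
  defines "S \<equiv> stack_nodes n"
  shows "components n d1 d2 = S // ((stack_rel d1 d2)\<^sup>* \<inter> S \<times> S)"
  using stack_connected_closed[OF assms(1,2)]
  unfolding components_def quotient_def S_def by blast

lemma partition_on_components:
  assumes "d1 \<in> diagrams n" "d2 \<in> diagrams n"
  shows "partition_on (stack_nodes n) (components n d1 d2)"
proof -
  let ?S = "stack_nodes n"
  have "equiv ?S ((stack_rel d1 d2)\<^sup>* \<inter> ?S \<times> ?S)"
    using equiv_stack_connected unfolding equiv_def refl_on_def sym_def trans_def by blast
  then show ?thesis
    unfolding components_eq_quotient[OF assms] by (rule partition_on_quotient)
qed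

lemma compose_eq_vimage: "compose n d1 d2 = (-`) Inl ` components n d1 d2 - {{}}"
  unfolding compose_def by blast

lemma compose_diagram:
  assumes "d1 \<in> diagrams n" "d2 \<in> diagrams n"
  shows "compose n d1 d2 \<in> diagrams n"
proof -
  have "Inl -` stack_nodes n = pnodes n"
    by auto
  then show ?thesis
    using partition_on_vimage[OF partition_on_components[OF assms], of Inl]
    unfolding diagrams_def compose_eq_vimage by simp
qed

lemma Inl_mem_compose:
  assumes "v \<in> pnodes n"
  shows "Inl -` ((stack_rel d1 d2)\<^sup>* `` {Inl v}) \<in> compose n d1 d2"
proof -
  have "(stack_rel d1 d2)\<^sup>* `` {Inl v} \<in> components n d1 d2"
    unfolding components_def using assms by (intro quotientI) simp
  moreover have "Inl v \<in> (stack_rel d1 d2)\<^sup>* `` {Inl v}"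
    by simp
  ultimately show ?thesis
    unfolding compose_def by blast
qed

lemma compose_right_singleton:
  assumes d2: "d2 \<in> diagrams n" and z: "{z} \<in> d2" "z > 0"
  shows "{z} \<in> compose n d1 d2"
proof -
  let ?R = "(stack_rel d1 d2)\<^sup>*"
  have "b = Inl z" if "(Inl z, b) \<in> ?R" for b
    using that
  proof (induction rule: rtrancl_induct)
    case (step b c)
    then obtain Bl where Bl: "Bl \<in> stack_blocks d1 d2" "Inl z \<in> Bl" "c \<in> Bl"
      unfolding stack_rel_def by blast
    then obtain B2 where B2: "B2 \<in> d2" "Bl = lift2 ` B2" "z \<in> B2"
      using \<open>z > 0\<close> unfolding stack_blocks_def lift1_def lift2_def
      by (auto split: if_splits)
    then have "B2 = {z}"
      using diagram_block_unique[OF d2 B2(1) z(1)] by simp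
    then show ?case
      using B2(2) Bl(3) z(2) by simp
  qed simp
  then have "Inl -` (?R `` {Inl z}) = {z}"
    by auto
  moreover have "z \<in> pnodes n"
    using diagram_block_subset[OF d2 z(1)] by simp
  ultimately show ?thesis
    using Inl_mem_compose[of z n d1 d2] by metis
qed

lemma compose_right_same_block:
  assumes "d2 \<in> diagrams n" "B \<in> d2" "z1 \<in> B" "z2 \<in> B" "z1 > 0" "z2 > 0"
  shows "\<exists>Bl\<in>compose n d1 d2. z1 \<in> Bl \<and> z2 \<in> Bl"
proof
  let ?C = "Inl -` ((stack_rel d1 d2)\<^sup>* `` {Inl z1})"
  have "Inl z1 = lift2 z1" "Inl z2 = lift2 z2"
    using assms(5,6) by simp_all
  then have "Inl z1 \<in> lift2 ` B" "Inl z2 \<in> lift2 ` B"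
    using assms(3,4) by (metis imageI)+
  then have "(Inl z1, Inl z2) \<in> (stack_rel d1 d2)\<^sup>*"
    by (rule stack_connected_right_block[OF assms(2)])
  then show "z1 \<in> ?C \<and> z2 \<in> ?C"
    by simp
  have "z1 \<in> pnodes n"
    using diagram_block_subset[OF assms(1,2)] assms(3) by blast
  then show "?C \<in> compose n d1 d2"
    by (rule Inl_mem_compose)
qed

section \<open>Diagrams fixed by right multiplication\<close>

text \<open>A retraction \<open>\<phi>\<close> of the stacked graph of \<open>d1\<close> over \<open>d2\<close> onto the nodes of \<open>d1\<close>:
  if every stacked block lands in a block of \<open>d1\<close> and every node is connected to the
  left copy of its image (or is alone in its fibre), then the components are exactly the
  fibres over the blocks of \<open>d1\<close>, so \<open>d1 d2 = d1\<close> and no component consists of middle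
  nodes only.\<close>

locale stack_retraction =
  fixes n :: nat and d1 d2 :: "int set set" and \<phi> :: "int + int \<Rightarrow> int"
  assumes d1: "d1 \<in> diagrams n" and d2: "d2 \<in> diagrams n"
    and \<phi>_Inl [simp]: "\<phi> (Inl v) = v"
    and \<phi>_mem_pnodes: "a \<in> stack_nodes n \<Longrightarrow> \<phi> a \<in> pnodes n"
    and \<phi>_stack_block: "Bl \<in> stack_blocks d1 d2 \<Longrightarrow> \<exists>D\<in>d1. \<phi> ` Bl \<subseteq> D"
    and \<phi>_connected: "a \<in> stack_nodes n \<Longrightarrow>
      (a, lift1 (\<phi> a)) \<in> (stack_rel d1 d2)\<^sup>* \<or>
      (\<forall>b\<in>stack_nodes n. (\<exists>D\<in>d1. \<phi> a \<in> D \<and> \<phi> b \<in> D) \<longrightarrow> b = a)"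
begin

lemma connected_imp_same_block:
  assumes "a \<in> stack_nodes n" "(a, b) \<in> (stack_rel d1 d2)\<^sup>*"
  shows "\<exists>D\<in>d1. \<phi> a \<in> D \<and> \<phi> b \<in> D"
  using assms(2)
proof (induction rule: rtrancl_induct)
  case base
  then show ?case
    using diagram_block_exists[OF d1 \<phi>_mem_pnodes[OF assms(1)]] by blast
next
  case (step b c)
  then obtain D where D: "D \<in> d1" "\<phi> a \<in> D" "\<phi> b \<in> D"
    by blast
  obtain Bl where Bl: "Bl \<in> stack_blocks d1 d2" "b \<in> Bl" "c \<in> Bl"
    using step(2) unfolding stack_rel_def by blast
  obtain D' where D': "D' \<in> d1" "\<phi> ` Bl \<subseteq> D'"
    using \<phi>_stack_block[OF Bl(1)] by blast
  then have "D' = D"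
    using diagram_block_unique[OF d1 D'(1) D(1)] D(3) Bl(2) by blast
  then show ?case
    using D D' Bl(3) by blast
qed

lemma same_block_imp_connected:
  assumes ab: "a \<in> stack_nodes n" "b \<in> stack_nodes n"
    and D: "D \<in> d1" "\<phi> a \<in> D" "\<phi> b \<in> D"
  shows "(a, b) \<in> (stack_rel d1 d2)\<^sup>*"
proof (cases "a = b")
  case False
  have "(a, lift1 (\<phi> a)) \<in> (stack_rel d1 d2)\<^sup>*"
    using \<phi>_connected[OF ab(1)] ab(2) D False by metis
  moreover have "(b, lift1 (\<phi> b)) \<in> (stack_rel d1 d2)\<^sup>*"
    using \<phi>_connected[OF ab(2)] ab(1) D False by metis
  moreover have "(lift1 (\<phi> a), lift1 (\<phi> b)) \<in> (stack_rel d1 d2)\<^sup>*"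
    using D by (intro stack_connected_left_block[of D]) auto
  ultimately show ?thesis
    by (meson rtrancl_trans stack_connected_sym)
qed simp

lemma component_eq_fibre:
  assumes a: "a \<in> stack_nodes n" and D: "D \<in> d1" "\<phi> a \<in> D"
  shows "(stack_rel d1 d2)\<^sup>* `` {a} = {b \<in> stack_nodes n. \<phi> b \<in> D}"
proof (intro equalityI subsetI)
  fix b
  assume "b \<in> (stack_rel d1 d2)\<^sup>* `` {a}"
  then have b: "(a, b) \<in> (stack_rel d1 d2)\<^sup>*"
    by simp
  then obtain D' where "D' \<in> d1" "\<phi> a \<in> D'" "\<phi> b \<in> D'"
    using connected_imp_same_block[OF a] by blast
  then show "b \<in> {b \<in> stack_nodes n. \<phi> b \<in> D}"
    using diagram_block_unique[OF d1 _ D(1)] D(2) stack_connected_closed[OF d1 d2 b a] by blast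
next
  fix b
  assume "b \<in> {b \<in> stack_nodes n. \<phi> b \<in> D}"
  then show "b \<in> (stack_rel d1 d2)\<^sup>* `` {a}"
    using same_block_imp_connected[OF a _ D] by blast
qed

lemma vimage_fibre: "D \<in> d1 \<Longrightarrow> Inl -` {b \<in> stack_nodes n. \<phi> b \<in> D} = D"
  using diagram_block_subset[OF d1] by auto

lemma compose_eq_left: "compose n d1 d2 = d1"
proof (intro equalityI subsetI)
  fix p
  assume "p \<in> compose n d1 d2"
  then obtain a where a: "a \<in> stack_nodes n" "p = Inl -` ((stack_rel d1 d2)\<^sup>* `` {a})"
    unfolding compose_def components_def quotient_def by blast
  obtain D where "D \<in> d1" "\<phi> a \<in> D"
    using diagram_block_exists[OF d1 \<phi>_mem_pnodes[OF a(1)]] by blast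
  then show "p \<in> d1"
    using a component_eq_fibre vimage_fibre by simp
next
  fix D
  assume D: "D \<in> d1"
  then obtain v where v: "v \<in> D"
    using diagram_block_nonempty[OF d1] by blast
  then have "v \<in> pnodes n"
    using diagram_block_subset[OF d1 D] by blast
  then have "Inl -` ((stack_rel d1 d2)\<^sup>* `` {Inl v}) \<in> compose n d1 d2"
    by (rule Inl_mem_compose)
  then show "D \<in> compose n d1 d2"
    using component_eq_fibre[of "Inl v" D] vimage_fibre[OF D] D v \<open>v \<in> pnodes n\<close> by simp
qed

lemma middle_count_eq_0: "middle_count n d1 d2 = 0"
proof -
  have "\<not> C \<subseteq> range Inr" if C: "C \<in> components n d1 d2" for C
  proof -
    obtain a where a: "a \<in> stack_nodes n" "C = (stack_rel d1 d2)\<^sup>* `` {a}"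
      using C unfolding components_def quotient_def by blast
    obtain D where "D \<in> d1" "\<phi> a \<in> D"
      using diagram_block_exists[OF d1 \<phi>_mem_pnodes[OF a(1)]] by blast
    then have "Inl (\<phi> a) \<in> C"
      using a component_eq_fibre \<phi>_mem_pnodes by simp
    then show ?thesis
      by blast
  qed
  then have "{C \<in> components n d1 d2. C \<subseteq> range Inr} = {}"
    by blast
  then show ?thesis
    unfolding middle_count_def by (simp only: card.empty)
qed

end

lemma perm_diagram_no_singleton:
  assumes "perm_diagram n d"
  shows "{v} \<notin> d"
proof
  assume "{v} \<in> d"
  then obtain i j :: int where ij: "1 \<le> i" "1 \<le> j" and eq: "{v} = {- i, j}"
    using assms unfolding perm_diagram_def by auto
  have "- i \<in> {v}" "j \<in> {v}"
    unfolding eq by simp_all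
  then show False
    using ij by simp
qed

definition id_blocks :: "nat \<Rightarrow> int set \<Rightarrow> int set set" where
  "id_blocks n I = {{- i, i} | i. 1 \<le> i \<and> i \<le> int n \<and> i \<notin> I}"

lemma partition_on_id_blocks: "partition_on {v \<in> pnodes n. \<bar>v\<bar> \<notin> I} (id_blocks n I)"
proof (rule partition_onI)
  show "\<Union> (id_blocks n I) = {v \<in> pnodes n. \<bar>v\<bar> \<notin> I}"
  proof (intro equalityI subsetI)
    fix v
    assume "v \<in> \<Union> (id_blocks n I)"
    then obtain i where "1 \<le> i" "i \<le> int n" "i \<notin> I" "v = - i \<or> v = i"
      unfolding id_blocks_def by blast
    then show "v \<in> {v \<in> pnodes n. \<bar>v\<bar> \<notin> I}"
      by (auto simp: mem_pnodes_iff)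
  next
    fix v
    assume v: "v \<in> {v \<in> pnodes n. \<bar>v\<bar> \<notin> I}"
    then have "{- \<bar>v\<bar>, \<bar>v\<bar>} \<in> id_blocks n I"
      unfolding id_blocks_def mem_pnodes_iff by blast
    moreover have "v \<in> {- \<bar>v\<bar>, \<bar>v\<bar>}"
      by (cases "v \<ge> 0") simp_all
    ultimately show "v \<in> \<Union> (id_blocks n I)"
      by blast
  qed
next
  fix p q
  assume "p \<in> id_blocks n I" "q \<in> id_blocks n I" "p \<noteq> q"
  then show "disjnt p q"
    by (auto simp: id_blocks_def disjnt_def)
qed (auto simp: id_blocks_def)

lemma diagram_Un_id_blocks:
  assumes K: "partition_on {v. \<bar>v\<bar> \<in> I} K" and I: "I \<subseteq> {1 .. int n}"
  shows "K \<union> id_blocks n I \<in> diagrams n"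
proof -
  note ids = partition_on_id_blocks[of n I]
  have "{v. \<bar>v\<bar> \<in> I} \<union> {v \<in> pnodes n. \<bar>v\<bar> \<notin> I} = pnodes n"
    using I by (auto simp: mem_pnodes_iff)
  moreover have "disjoint (K \<union> id_blocks n I)"
  proof (rule disjoint_union)
    show "\<Union> K \<inter> \<Union> (id_blocks n I) = {}"
      using partition_onD1[OF K] partition_onD1[OF ids] by blast
  qed (use partition_onD2[OF K] partition_onD2[OF ids] in auto)
  ultimately show ?thesis
    using K ids unfolding diagrams_def partition_on_def by auto
qed

lemma id_block_connected:
  assumes "{- i, i} \<in> e" "0 < i"
  shows "(Inl i, Inr i) \<in> (stack_rel d e)\<^sup>*"
proof (rule stack_connected_right_block[OF assms(1)])
  show "Inl i \<in> lift2 ` {- i, i}" "Inr i \<in> lift2 ` {- i, i}"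
    using assms(2) by simp_all
qed

lemma case_sum_id_lift1 [simp]: "case_sum id g (lift1 v) = (if v < 0 then v else g v)"
  by (simp add: lift1_def)

text \<open>Right identities that are not permutation diagrams: \<open>singleton_idem n x y\<close> fixes
  every diagram having \<open>{x}\<close> as a block, \<open>joined_idem n x y\<close> every diagram in which \<open>x\<close>
  and \<open>y\<close> share a block.\<close>

definition singleton_idem :: "nat \<Rightarrow> int \<Rightarrow> int \<Rightarrow> int set set" where
  "singleton_idem n x y = {{- x, - y, y}, {x}} \<union> id_blocks n {x, y}"

definition joined_idem :: "nat \<Rightarrow> int \<Rightarrow> int \<Rightarrow> int set set" where
  "joined_idem n x y = {{- x}, {- y, y, x}} \<union> id_blocks n {x, y}"

lemma abs_mem_pair_iff:
  "0 < x \<Longrightarrow> 0 < y \<Longrightarrow> {v :: int. \<bar>v\<bar> \<in> {x, y}} = {- x, x, - y, y}"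
  by (auto simp: abs_if)

lemma singleton_idem_diagram:
  assumes "x \<in> {1 .. int n}" "y \<in> {1 .. int n}" "x \<noteq> y"
  shows "singleton_idem n x y \<in> diagrams n"
  unfolding singleton_idem_def
proof (rule diagram_Un_id_blocks)
  show "partition_on {v. \<bar>v\<bar> \<in> {x, y}} {{- x, - y, y}, {x}}"
    unfolding abs_mem_pair_iff[of x y] using assms
    by (intro partition_onI) (auto simp: disjnt_def)
qed (use assms in auto)

lemma joined_idem_diagram:
  assumes "x \<in> {1 .. int n}" "y \<in> {1 .. int n}" "x \<noteq> y"
  shows "joined_idem n x y \<in> diagrams n"
  unfolding joined_idem_def
proof (rule diagram_Un_id_blocks)
  show "partition_on {v. \<bar>v\<bar> \<in> {x, y}} {{- x}, {- y, y, x}}"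
    unfolding abs_mem_pair_iff[of x y] using assms
    by (intro partition_onI) (auto simp: disjnt_def)
qed (use assms in auto)

lemma singleton_idem_stack_block:
  fixes x y :: int
  defines "\<phi> \<equiv> case_sum id (\<lambda>i. if i = x then y else i)"
  assumes d: "d \<in> diagrams n" and dx: "{x} \<in> d"
    and xy: "x \<in> {1 .. int n}" "y \<in> {1 .. int n}" "x \<noteq> y"
    and Bl: "Bl \<in> stack_blocks d (singleton_idem n x y)"
  shows "\<exists>D\<in>d. \<phi> ` Bl \<subseteq> D"
proof -
  have point: "\<exists>D\<in>d. \<phi> ` Bl \<subseteq> D" if "\<phi> ` Bl \<subseteq> {v}" "v \<in> {1 .. int n}" for v
    using that diagram_block_exists[OF d, of v] by (auto simp: mem_pnodes_iff)
  from Bl consider (left) B where "B \<in> d" "Bl = lift1 ` B"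
    | (through) "Bl = lift2 ` {- x, - y, y}" | (single) "Bl = lift2 ` {x}"
    | (ident) i where "Bl = lift2 ` {- i, i}" "1 \<le> i" "i \<le> int n" "i \<noteq> x"
    unfolding stack_blocks_def singleton_idem_def id_blocks_def by blast
  then show ?thesis
  proof cases
    case left
    show ?thesis
    proof (cases "x \<in> B")
      case True
      then have "B = {x}"
        using diagram_block_unique[OF d left(1) dx] by simp
      then show ?thesis
        using left(2) xy by (intro point[of y]) (simp_all add: \<phi>_def)
    next
      case False
      then have "\<phi> ` Bl \<subseteq> B"
        using left(2) by (auto simp: \<phi>_def)
      then show ?thesis
        using left(1) by blast
    qed
  next
    case through
    show ?thesis
      by (rule point[of y]) (use through xy in \<open>simp_all add: \<phi>_def\<close>)
  next
    case single
    show ?thesis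
      by (rule point[of x]) (use single xy in \<open>simp_all add: \<phi>_def\<close>)
  next
    case ident
    show ?thesis
      by (rule point[of i]) (use ident in \<open>simp_all add: \<phi>_def\<close>)
  qed
qed

lemma singleton_idem_connected:
  fixes x y :: int
  defines "\<phi> \<equiv> case_sum id (\<lambda>i. if i = x then y else i)"
  assumes d: "d \<in> diagrams n" and dx: "{x} \<in> d"
    and xy: "x \<in> {1 .. int n}" "y \<in> {1 .. int n}" "x \<noteq> y"
    and a: "a \<in> stack_nodes n"
  shows "(a, lift1 (\<phi> a)) \<in> (stack_rel d (singleton_idem n x y))\<^sup>* \<or>
    (\<forall>b\<in>stack_nodes n. (\<exists>D\<in>d. \<phi> a \<in> D \<and> \<phi> b \<in> D) \<longrightarrow> b = a)"
proof -
  let ?R = "(stack_rel d (singleton_idem n x y))\<^sup>*"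
  have pos: "0 < x" "0 < y"
    using xy by auto
  have "Inl y \<in> lift2 ` {- x, - y, y}" "Inr x \<in> lift2 ` {- x, - y, y}" "Inr y \<in> lift2 ` {- x, - y, y}"
    using pos by simp_all
  then have through: "(Inl y, Inr y) \<in> ?R" "(Inr x, Inr y) \<in> ?R"
    by (auto intro: stack_connected_right_block[of "{- x, - y, y}"] simp: singleton_idem_def)
  have ident: "(Inl i, Inr i) \<in> ?R" if "1 \<le> i" "i \<le> int n" "i \<notin> {x, y}" for i
    using that by (intro id_block_connected) (auto simp: singleton_idem_def id_blocks_def)
  show ?thesis
  proof (cases a)
    case (Inl v)
    then have "v \<in> pnodes n"
      using a by simp
    then consider "v < 0" | "v = x" | "v = y" | "1 \<le> v" "v \<le> int n" "v \<notin> {x, y}"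
      unfolding mem_pnodes_iff by (cases "v < 0") auto
    then show ?thesis
    proof cases
      case 2
      have "b = a" if "b \<in> stack_nodes n" "D \<in> d" "\<phi> a \<in> D" "\<phi> b \<in> D" for b D
      proof -
        have "D = {x}"
          using diagram_block_unique[OF d that(2) dx] that(3) Inl 2 by (simp add: \<phi>_def)
        then show "b = a"
          using that(4) Inl 2 xy(3) by (cases b) (auto simp: \<phi>_def split: if_splits)
      qed
      then show ?thesis
        by blast
    qed (use Inl pos through ident in \<open>simp_all add: \<phi>_def\<close>)
  next
    case (Inr i)
    then show ?thesis
      using a pos through by (simp add: \<phi>_def)
  qed
qed

lemma compose_singleton_idem:
  assumes d: "d \<in> diagrams n" and dx: "{x} \<in> d"
    and xy: "x \<in> {1 .. int n}" "y \<in> {1 .. int n}" "x \<noteq> y"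
  shows "compose n d (singleton_idem n x y) = d \<and> middle_count n d (singleton_idem n x y) = 0"
proof -
  interpret stack_retraction n d "singleton_idem n x y" "case_sum id (\<lambda>i. if i = x then y else i)"
  proof unfold_locales
    show "d \<in> diagrams n" "singleton_idem n x y \<in> diagrams n"
      using d singleton_idem_diagram[OF xy] by simp_all
  next
    fix a :: "int + int"
    assume "a \<in> stack_nodes n"
    then show "case_sum id (\<lambda>i. if i = x then y else i) a \<in> pnodes n"
      using xy by (cases a) (auto simp: mem_pnodes_iff)
  qed (simp_all add: singleton_idem_stack_block[OF d dx xy] singleton_idem_connected[OF d dx xy])
  show ?thesis
    using compose_eq_left middle_count_eq_0 by simp
qed

lemma joined_idem_stack_block:
  assumes d: "d \<in> diagrams n" and B0: "B0 \<in> d" "x \<in> B0" "y \<in> B0"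
    and xy: "x \<in> {1 .. int n}" "y \<in> {1 .. int n}" "x \<noteq> y"
    and Bl: "Bl \<in> stack_blocks d (joined_idem n x y)"
  shows "\<exists>D\<in>d. case_sum id id ` Bl \<subseteq> D"
proof -
  have point: "\<exists>D\<in>d. case_sum id id ` Bl \<subseteq> D"
    if "case_sum id id ` Bl \<subseteq> {v}" "v \<in> {1 .. int n}" for v
    using that diagram_block_exists[OF d, of v] by (auto simp: mem_pnodes_iff)
  from Bl consider (left) B where "B \<in> d" "Bl = lift1 ` B"
    | (single) "Bl = lift2 ` {- x}" | (through) "Bl = lift2 ` {- y, y, x}"
    | (ident) i where "Bl = lift2 ` {- i, i}" "1 \<le> i" "i \<le> int n"
    unfolding stack_blocks_def joined_idem_def id_blocks_def by blast
  then show ?thesis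
  proof cases
    case left
    then have "case_sum id id ` Bl \<subseteq> B"
      by auto
    then show ?thesis
      using left(1) by blast
  next
    case single
    show ?thesis
      by (rule point[of x]) (use single xy in simp_all)
  next
    case through
    then have "case_sum id id ` Bl \<subseteq> B0"
      using xy B0 by simp
    then show ?thesis
      using B0 by blast
  next
    case ident
    show ?thesis
      by (rule point[of i]) (use ident in simp_all)
  qed
qed

lemma joined_idem_connected:
  assumes d: "d \<in> diagrams n" and B0: "B0 \<in> d" "x \<in> B0" "y \<in> B0"
    and xy: "x \<in> {1 .. int n}" "y \<in> {1 .. int n}" "x \<noteq> y"
    and a: "a \<in> stack_nodes n"
  shows "(a, lift1 (case_sum id id a)) \<in> (stack_rel d (joined_idem n x y))\<^sup>*"
proof -
  let ?R = "(stack_rel d (joined_idem n x y))\<^sup>*"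
  have pos: "0 < x" "0 < y"
    using xy by auto
  have "Inl x \<in> lift2 ` {- y, y, x}" "Inl y \<in> lift2 ` {- y, y, x}" "Inr y \<in> lift2 ` {- y, y, x}"
    using pos by simp_all
  then have through: "(Inl x, Inr y) \<in> ?R" "(Inl y, Inr y) \<in> ?R"
    by (auto intro: stack_connected_right_block[of "{- y, y, x}"] simp: joined_idem_def)
  have "Inr y \<in> lift1 ` B0" "Inr x \<in> lift1 ` B0"
    using B0 pos by (metis imageI lift1_pos)+
  then have "(Inr y, Inr x) \<in> ?R"
    by (rule stack_connected_left_block[OF B0(1)])
  then have x_connected: "(Inl x, Inr x) \<in> ?R"
    using through(1) by (rule rtrancl_trans[rotated])
  have ident: "(Inl i, Inr i) \<in> ?R" if "1 \<le> i" "i \<le> int n" "i \<notin> {x, y}" for i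
    using that by (intro id_block_connected) (auto simp: joined_idem_def id_blocks_def)
  show ?thesis
  proof (cases a)
    case (Inl v)
    then have "v \<in> pnodes n"
      using a by simp
    then consider "v < 0" | "v = x" | "v = y" | "1 \<le> v" "v \<le> int n" "v \<notin> {x, y}"
      unfolding mem_pnodes_iff by (cases "v < 0") auto
    then show ?thesis
      by cases (use Inl pos through x_connected ident in simp_all)
  next
    case (Inr i)
    then show ?thesis
      using a by simp
  qed
qed

lemma compose_joined_idem:
  assumes d: "d \<in> diagrams n" and B0: "B0 \<in> d" "x \<in> B0" "y \<in> B0"
    and xy: "x \<in> {1 .. int n}" "y \<in> {1 .. int n}" "x \<noteq> y"
  shows "compose n d (joined_idem n x y) = d \<and> middle_count n d (joined_idem n x y) = 0"
proof -
  interpret stack_retraction n d "joined_idem n x y" "case_sum id id"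
  proof unfold_locales
    show "d \<in> diagrams n" "joined_idem n x y \<in> diagrams n"
      using d joined_idem_diagram[OF xy] by simp_all
  next
    fix a :: "int + int"
    assume "a \<in> stack_nodes n"
    then show "case_sum id id a \<in> pnodes n"
      by (cases a) (auto simp: mem_pnodes_iff)
  qed (simp_all add: joined_idem_stack_block[OF d B0 xy] joined_idem_connected[OF d B0 xy])
  show ?thesis
    using compose_eq_left middle_count_eq_0 by simp
qed

section \<open>Spans of diagrams\<close>

definition basis_vec :: "int set set \<Rightarrow> int set set \<Rightarrow> 'r::comm_ring_1" where
  "basis_vec d = (\<lambda>d'. if d' = d then 1 else 0)"

lemma pmult_basis_vec:
  assumes "d1 \<in> diagrams n" "d2 \<in> diagrams n"
  shows "pmult n \<delta> (psmult r (basis_vec d1)) (psmult s (basis_vec d2))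
    = psmult (r * s * \<delta> ^ middle_count n d1 d2) (basis_vec (compose n d1 d2))"
proof
  fix d
  let ?c = "if compose n d1 d2 = d then r * s * \<delta> ^ middle_count n d1 d2 else 0"
  have "pmult n \<delta> (psmult r (basis_vec d1)) (psmult s (basis_vec d2)) d
      = (\<Sum>e1\<in>diagrams n. \<Sum>e2\<in>diagrams n. if e1 = d1 then (if e2 = d2 then ?c else 0) else 0)"
    unfolding pmult_def psmult_def basis_vec_def by (intro sum.cong refl) simp
  also have "\<dots> = ?c"
    using assms by (subst sum.swap) (simp add: finite_diagrams)
  finally show "pmult n \<delta> (psmult r (basis_vec d1)) (psmult s (basis_vec d2)) d
      = psmult (r * s * \<delta> ^ middle_count n d1 d2) (basis_vec (compose n d1 d2)) d"
    by (simp add: psmult_def basis_vec_def)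
qed

lemma pmult_psmult_left: "pmult n \<delta> (psmult r a) m = psmult r (pmult n \<delta> a m)"
  unfolding pmult_def psmult_def by (auto simp: sum_distrib_left mult.assoc intro!: sum.cong)

lemma pmult_zero_right: "pmult n \<delta> a 0 = 0"
  unfolding pmult_def by (rule ext) (simp cong: if_cong)

lemma psmult_zero_right: "psmult r 0 = 0"
  unfolding psmult_def by (rule ext) simp

lemma eps_psmult: "eps n (psmult r f) = r * eps n f"
  unfolding eps_def psmult_def by (simp add: sum_distrib_left)

lemma eps_basis_vec: "\<not> perm_diagram n e \<Longrightarrow> eps n (psmult r (basis_vec e)) = 0"
  unfolding eps_def psmult_def basis_vec_def by (intro sum.neutral) auto

lemma PA_psmult: "a \<in> PA n \<Longrightarrow> psmult r a \<in> PA n"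
  unfolding PA_def psmult_def by simp

lemma PA_eq_span_of: "PA n = span_of n (diagrams n)"
  unfolding span_of_def PA_def by blast

lemma span_of_mono: "S \<subseteq> T \<Longrightarrow> span_of n S \<subseteq> span_of n T"
  unfolding span_of_def by blast

lemma span_of_subset_PA: "span_of n S \<subseteq> PA n"
  unfolding span_of_def by blast

lemma psmult_basis_vec_mem_span_of:
  "e \<in> S \<Longrightarrow> e \<in> diagrams n \<Longrightarrow> psmult r (basis_vec e) \<in> span_of n S"
  unfolding span_of_def PA_def psmult_def basis_vec_def by auto

lemma span_of_eq_sum_basis_vec:
  assumes S: "S \<subseteq> diagrams n" and f: "f \<in> span_of n S"
  shows "f = (\<Sum>d\<in>S. psmult (f d) (basis_vec d))"
proof
  fix e
  have fin: "finite S"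
    using finite_subset[OF S finite_diagrams] .
  have "(\<Sum>d\<in>S. psmult (f d) (basis_vec d)) e = (\<Sum>d\<in>S. if e = d then f d else 0)"
    unfolding psmult_def basis_vec_def by (induction S rule: infinite_finite_induct) (auto simp: fin)
  also have "\<dots> = f e"
    using fin f unfolding span_of_def by auto
  finally show "f e = (\<Sum>d\<in>S. psmult (f d) (basis_vec d)) e"
    by simp
qed

lemma left_submodule_span_of:
  fixes \<delta> :: "'r::comm_ring_1"
  assumes S: "S \<subseteq> diagrams n"
    and closed: "\<And>d1 d2. d1 \<in> diagrams n \<Longrightarrow> d2 \<in> S \<Longrightarrow> compose n d1 d2 \<in> S"
  shows "left_submodule n \<delta> (span_of n S)"
proof -
  have "pmult n \<delta> a u \<in> span_of n S" if u: "u \<in> span_of n S" for a u :: "int set set \<Rightarrow> 'r"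
  proof -
    have "pmult n \<delta> a u d = 0" if d: "d \<notin> S" for d
      unfolding pmult_def
    proof (intro sum.neutral ballI)
      fix e1 e2
      assume "e1 \<in> diagrams n" "e2 \<in> diagrams n"
      then have "compose n e1 e2 = d \<Longrightarrow> u e2 = 0"
        using closed d u unfolding span_of_def by blast
      then show "(if compose n e1 e2 = d then a e1 * u e2 * \<delta> ^ middle_count n e1 e2 else 0) = 0"
        by simp
    qed
    moreover have "pmult n \<delta> a u \<in> PA n"
      unfolding PA_def pmult_def using S closed compose_diagram by (auto intro!: sum.neutral)
    ultimately show ?thesis
      unfolding span_of_def by blast
  qed
  then show ?thesis
    unfolding left_submodule_def by (auto simp: span_of_def PA_def psmult_def)
qed

lemma left_submodule_PA: "left_submodule n \<delta> (PA n)"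
  unfolding PA_eq_span_of by (rule left_submodule_span_of) (auto intro: compose_diagram)

lemma span_of_add_disjoint:
  assumes "S \<inter> T = {}" "u \<in> span_of n S" "v \<in> span_of n T" "u + v \<in> span_of n U"
  shows "u \<in> span_of n U"
  using assms unfolding span_of_def by auto (metis add.right_neutral disjoint_iff)

section \<open>Additive subgroups and quotients\<close>

definition add_subgroup :: "'m::ab_group_add set \<Rightarrow> bool" where
  "add_subgroup S \<longleftrightarrow> 0 \<in> S \<and> (\<forall>u\<in>S. \<forall>v\<in>S. u - v \<in> S)"

lemma add_subgroup_zero: "add_subgroup S \<Longrightarrow> 0 \<in> S"
  and add_subgroup_diff: "add_subgroup S \<Longrightarrow> u \<in> S \<Longrightarrow> v \<in> S \<Longrightarrow> u - v \<in> S"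
  unfolding add_subgroup_def by blast+

lemma add_subgroup_uminus: "add_subgroup S \<Longrightarrow> v \<in> S \<Longrightarrow> - v \<in> S"
  using add_subgroup_diff[of S 0 v] add_subgroup_zero[of S] by simp

lemma add_subgroup_add: "add_subgroup S \<Longrightarrow> u \<in> S \<Longrightarrow> v \<in> S \<Longrightarrow> u + v \<in> S"
  using add_subgroup_diff[of S u "- v"] add_subgroup_uminus[of S v] by simp

lemma add_subgroupI:
  assumes "0 \<in> S" "\<And>u v. u \<in> S \<Longrightarrow> v \<in> S \<Longrightarrow> u + v \<in> S" "\<And>v. v \<in> S \<Longrightarrow> - v \<in> S"
  shows "add_subgroup S"
  unfolding add_subgroup_def using assms by (metis diff_conv_add_uminus)

lemma add_subgroup_Times: "add_subgroup S \<Longrightarrow> add_subgroup T \<Longrightarrow> add_subgroup (S \<times> T)"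
  unfolding add_subgroup_def by (auto simp: zero_prod_def)

lemma add_subgroup_Int: "add_subgroup S \<Longrightarrow> add_subgroup T \<Longrightarrow> add_subgroup (S \<inter> T)"
  unfolding add_subgroup_def by blast

lemma add_subgroup_span_of: "add_subgroup (span_of n S)"
  unfolding add_subgroup_def span_of_def PA_def by simp

lemma add_subgroup_left_submodule:
  assumes "left_submodule n \<delta> S"
  shows "add_subgroup S"
proof (rule add_subgroupI)
  show "0 \<in> S" "\<And>u v. u \<in> S \<Longrightarrow> v \<in> S \<Longrightarrow> u + v \<in> S"
    using assms unfolding left_submodule_def by blast+
next
  fix v
  assume "v \<in> S"
  then have "psmult (- 1) v \<in> S"
    using assms unfolding left_submodule_def by blast
  moreover have "psmult (- 1) v = - v"
    by (simp add: psmult_def fun_eq_iff)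
  ultimately show "- v \<in> S"
    by simp
qed

lemma mem_setsum_iff: "z \<in> setsum N K \<longleftrightarrow> (\<exists>u\<in>N. \<exists>v\<in>K. z = u + v)"
  unfolding setsum_def by blast

lemma setsumE:
  assumes "z \<in> setsum N K"
  obtains u v where "u \<in> N" "v \<in> K" "z = u + v"
  using assms unfolding setsum_def by blast

lemma add_subgroup_setsum:
  assumes N: "add_subgroup N" and K: "add_subgroup K"
  shows "add_subgroup (setsum N K)"
proof (rule add_subgroupI)
  show "0 \<in> setsum N K"
    using add_subgroup_zero[OF N] add_subgroup_zero[OF K] unfolding mem_setsum_iff by force
next
  fix u v
  assume "u \<in> setsum N K" "v \<in> setsum N K"
  then obtain u1 u2 v1 v2 where "u1 \<in> N" "v1 \<in> N" "u2 \<in> K" "v2 \<in> K" "u = u1 + u2" "v = v1 + v2"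
    unfolding mem_setsum_iff by blast
  moreover have "u1 + u2 + (v1 + v2) = (u1 + v1) + (u2 + v2)"
    by (simp add: algebra_simps)
  ultimately show "u + v \<in> setsum N K"
    unfolding mem_setsum_iff using add_subgroup_add[OF N] add_subgroup_add[OF K] by metis
next
  fix v
  assume "v \<in> setsum N K"
  then obtain v1 v2 where "v1 \<in> N" "v2 \<in> K" "v = v1 + v2"
    by (rule setsumE)
  then show "- v \<in> setsum N K"
    unfolding mem_setsum_iff using add_subgroup_uminus[OF N] add_subgroup_uminus[OF K]
    by (metis add.commute minus_add)
qed

lemma subset_setsum_left: "0 \<in> K \<Longrightarrow> N \<subseteq> setsum N K"
  unfolding setsum_def by (metis (mono_tags, lifting) add.right_neutral mem_Collect_eq subsetI)

lemma subset_setsum_right: "0 \<in> N \<Longrightarrow> K \<subseteq> setsum N K"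
  unfolding setsum_def by (metis (mono_tags, lifting) add.left_neutral mem_Collect_eq subsetI)

lemma setsum_mono_left: "N \<subseteq> N' \<Longrightarrow> setsum N K \<subseteq> setsum N' K"
  unfolding setsum_def by blast

lemma setsum_absorb_left:
  assumes J: "add_subgroup J" and R: "add_subgroup R"
    and JX: "J \<subseteq> JX" "JX \<subseteq> setsum J R"
  shows "setsum JX R = setsum J R"
proof (intro equalityI subsetI)
  fix z
  assume "z \<in> setsum JX R"
  then obtain u v where uv: "u \<in> JX" "v \<in> R" "z = u + v"
    by (rule setsumE)
  have "u \<in> setsum J R" "v \<in> setsum J R"
    using JX(2) uv(1) subset_setsum_right[OF add_subgroup_zero[OF J]] uv(2) by blast+
  then show "z \<in> setsum J R"
    unfolding uv(3) by (rule add_subgroup_add[OF add_subgroup_setsum[OF J R]])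
next
  fix z
  assume "z \<in> setsum J R"
  then obtain u v where "u \<in> J" "v \<in> R" "z = u + v"
    by (rule setsumE)
  then show "z \<in> setsum JX R"
    using JX(1) unfolding mem_setsum_iff by blast
qed

lemma setsum_subset:
  assumes "add_subgroup S" "N \<subseteq> S" "K \<subseteq> S"
  shows "setsum N K \<subseteq> S"
  using assms add_subgroup_add unfolding setsum_def by blast

lemma setsum_absorb_right:
  assumes K: "add_subgroup K" and "N \<subseteq> K" "0 \<in> N"
  shows "setsum N K = K"
proof (intro equalityI subsetI)
  fix z
  assume "z \<in> setsum N K"
  then obtain u v where "u \<in> N" "v \<in> K" "z = u + v"
    by (rule setsumE)
  then show "z \<in> K"
    using assms(2) add_subgroup_add[OF K] by blast
qed (use subset_setsum_right[OF assms(3)] in blast)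

lemma span_of_Un_subset_setsum: "span_of n (S \<union> T) \<subseteq> setsum (span_of n S) (span_of n T)"
proof
  fix f
  assume f: "f \<in> span_of n (S \<union> T)"
  define u where "u = (\<lambda>d. if d \<in> S then f d else 0)"
  have "u \<in> span_of n S" "f - u \<in> span_of n T"
    using f unfolding u_def span_of_def PA_def by auto
  moreover have "f = u + (f - u)"
    by simp
  ultimately show "f \<in> setsum (span_of n S) (span_of n T)"
    unfolding mem_setsum_iff by blast
qed

lemma mem_coset_self: "add_subgroup S \<Longrightarrow> u \<in> coset S u"
  unfolding coset_def using add_subgroup_zero by force

lemma coset_eq_iff:
  assumes S: "add_subgroup S"
  shows "coset S u = coset S v \<longleftrightarrow> u - v \<in> S"
proof
  assume "coset S u = coset S v"
  then obtain k where "k \<in> S" "u = v + k"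
    using mem_coset_self[OF S, of u] unfolding coset_def by auto
  then show "u - v \<in> S"
    by simp
next
  assume uv: "u - v \<in> S"
  have "v + k \<in> coset S u" if "k \<in> S" for k
    using add_subgroup_diff[OF S that uv] unfolding coset_def by (force simp: algebra_simps)
  moreover have "u + k \<in> coset S v" if "k \<in> S" for k
    using add_subgroup_add[OF S uv that] unfolding coset_def by (force simp: algebra_simps)
  ultimately show "coset S u = coset S v"
    unfolding coset_def by blast
qed

lemma coset_eq_self_iff: "add_subgroup S \<Longrightarrow> coset S u = S \<longleftrightarrow> u \<in> S"
  using coset_eq_iff[of S u 0] add_subgroup_zero[of S] by (simp add: coset_def)

lemma induced_coset:
  assumes N: "add_subgroup N" and N2: "add_subgroup N2"
    and g: "\<And>u v. g (u - v) = g u - g v" and gN: "g ` N \<subseteq> N2"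
  shows "induced g N2 (coset N m) = coset N2 (g m)"
proof -
  have "(SOME z. z \<in> coset N m) \<in> coset N m"
    using mem_coset_self[OF N] by (rule someI)
  then have "(SOME z. z \<in> coset N m) - m \<in> N"
    unfolding coset_def by auto
  then show ?thesis
    unfolding induced_def coset_eq_iff[OF N2] g[symmetric] using gN by blast
qed

text \<open>Exactness of \<open>0 \<rightarrow> M/N \<rightarrow> P/J \<rightarrow> P/JX \<rightarrow> 0\<close>, the maps being induced by \<open>g\<close>
  and by the identity; the zero of \<open>P/JX\<close> is the coset \<open>JX\<close> itself.\<close>

definition short_exact_quot ::
  "'m::ab_group_add set \<Rightarrow> 'm set \<Rightarrow> ('m \<Rightarrow> 'n::ab_group_add) \<Rightarrow> 'n set \<Rightarrow> 'n set \<Rightarrow> 'n set \<Rightarrow> bool"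
where
  "short_exact_quot M N g P J JX \<longleftrightarrow>
     inj_on (induced g J) (quot M N) \<and>
     induced g J ` quot M N = {C \<in> quot P J. induced id JX C = JX} \<and>
     induced id JX ` quot P J = quot P JX"

lemma induced_id_image_quot:
  assumes "add_subgroup J" "add_subgroup JX" "J \<subseteq> JX"
  shows "induced id JX ` quot P J = quot P JX"
  using induced_coset[OF assms(1,2), of id] assms(3) unfolding quot_def image_image by simp

lemma inj_on_induced_quot:
  assumes M: "add_subgroup M" and N: "add_subgroup N" and J: "add_subgroup J"
    and g: "\<And>u v. g (u - v) = g u - g v" and gN: "g ` N \<subseteq> J"
    and kernel: "\<And>m. m \<in> M \<Longrightarrow> g m \<in> J \<Longrightarrow> m \<in> N"
  shows "inj_on (induced g J) (quot M N)"
proof (rule inj_onI)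
  fix C1 C2
  assume "C1 \<in> quot M N" "C2 \<in> quot M N" and eq: "induced g J C1 = induced g J C2"
  then obtain m1 m2 where m: "m1 \<in> M" "m2 \<in> M" "C1 = coset N m1" "C2 = coset N m2"
    unfolding quot_def by blast
  then have "g (m1 - m2) \<in> J"
    using eq induced_coset[OF N J g gN] coset_eq_iff[OF J] g by simp
  then show "C1 = C2"
    using kernel add_subgroup_diff[OF M m(1,2)] coset_eq_iff[OF N] m(3,4) by simp
qed

lemma short_exact_quotI:
  assumes M: "add_subgroup M" and N: "add_subgroup N"
    and J: "add_subgroup J" and JX: "add_subgroup JX" "J \<subseteq> JX" "JX \<subseteq> P"
    and g: "\<And>u v. g (u - v) = g u - g v" and gM: "g ` M \<subseteq> JX" and gN: "g ` N \<subseteq> J"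
    and kernel: "\<And>m. m \<in> M \<Longrightarrow> g m \<in> J \<Longrightarrow> m \<in> N"
    and image: "\<And>f. f \<in> JX \<Longrightarrow> \<exists>m\<in>M. g m - f \<in> J"
  shows "short_exact_quot M N g P J JX"
proof -
  note g_coset = induced_coset[OF N J g gN]
  note id_coset = induced_coset[OF J JX(1), of id, simplified, OF JX(2)]
  have "induced g J ` quot M N = {C \<in> quot P J. induced id JX C = JX}"
  proof (intro equalityI subsetI)
    fix C
    assume "C \<in> induced g J ` quot M N"
    then obtain m where "m \<in> M" "C = coset J (g m)"
      unfolding quot_def using g_coset by auto
    then show "C \<in> {C \<in> quot P J. induced id JX C = JX}"
      using gM JX(3) id_coset coset_eq_self_iff[OF JX(1)] unfolding quot_def by auto
  next
    fix C
    assume "C \<in> {C \<in> quot P J. induced id JX C = JX}"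
    then obtain f where f: "C = coset J f" "coset JX f = JX"
      unfolding quot_def using id_coset by auto
    then obtain m where "m \<in> M" "g m - f \<in> J"
      using image coset_eq_self_iff[OF JX(1)] by blast
    then have "induced g J (coset N m) = C"
      using f(1) g_coset coset_eq_iff[OF J] by simp
    moreover have "coset N m \<in> quot M N"
      unfolding quot_def using \<open>m \<in> M\<close> by blast
    ultimately show "C \<in> induced g J ` quot M N"
      by blast
  qed
  then show ?thesis
    unfolding short_exact_quot_def
    using inj_on_induced_quot[OF M N J g gN kernel] induced_id_image_quot[OF J JX(1,2)] by blast
qed

lemma short_exact_quot_self:
  assumes M: "add_subgroup M" and J: "add_subgroup J" "J \<subseteq> P"
    and g: "\<And>u v. g (u - v) = g u - g v" and gM: "g ` M \<subseteq> J"
  shows "short_exact_quot M M g P J J"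
proof (rule short_exact_quotI[OF M M J(1) J(1) subset_refl J(2) g gM gM])
  fix f
  assume "f \<in> J"
  moreover have "g 0 = 0"
    using g[of 0 0] by simp
  ultimately show "\<exists>m\<in>M. g m - f \<in> J"
    using add_subgroup_zero[OF M] add_subgroup_uminus[OF J(1)] by force
qed

section \<open>Balancing relations of the trivial module\<close>

lemma triv_relI:
  "(\<forall>i<k. a i \<in> PA n \<and> m i \<in> M) \<Longrightarrow>
    (\<Sum>i<(k::nat). sm (eps n (a i)) (m i) - act (a i) (m i)) \<in> triv_rel n sm act M"
  unfolding triv_rel_def by blast

lemma triv_relE:
  assumes "u \<in> triv_rel n sm act M"
  obtains k :: nat and a m
  where "u = (\<Sum>i<k. sm (eps n (a i)) (m i) - act (a i) (m i))" "\<forall>i<k. a i \<in> PA n \<and> m i \<in> M"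
  using assms unfolding triv_rel_def by auto

lemma triv_rel_zero: "0 \<in> triv_rel n sm act M"
  using triv_relI[of 0] by simp

lemma triv_rel_add_generator:
  assumes "u \<in> triv_rel n sm act M" "\<alpha> \<in> PA n" "\<mu> \<in> M"
  shows "u + (sm (eps n \<alpha>) \<mu> - act \<alpha> \<mu>) \<in> triv_rel n sm act M"
proof -
  obtain k :: nat and a m where u: "u = (\<Sum>i<k. sm (eps n (a i)) (m i) - act (a i) (m i))"
    and am: "\<forall>i<k. a i \<in> PA n \<and> m i \<in> M"
    using assms(1) by (rule triv_relE)
  let ?a = "a(k := \<alpha>)" and ?m = "m(k := \<mu>)"
  have "\<forall>i<Suc k. ?a i \<in> PA n \<and> ?m i \<in> M"
    using am assms(2,3) by (auto simp: less_Suc_eq)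
  then have "(\<Sum>i<Suc k. sm (eps n (?a i)) (?m i) - act (?a i) (?m i)) \<in> triv_rel n sm act M"
    by (rule triv_relI)
  moreover have "u = (\<Sum>i<k. sm (eps n (?a i)) (?m i) - act (?a i) (?m i))"
    unfolding u by (intro sum.cong) auto
  ultimately show ?thesis
    by simp
qed

lemma triv_rel_generator:
  "\<alpha> \<in> PA n \<Longrightarrow> \<mu> \<in> M \<Longrightarrow> sm (eps n \<alpha>) \<mu> - act \<alpha> \<mu> \<in> triv_rel n sm act M"
  using triv_rel_add_generator[OF triv_rel_zero] by simp

lemma triv_rel_add:
  assumes u: "u \<in> triv_rel n sm act M" and v: "v \<in> triv_rel n sm act M"
  shows "u + v \<in> triv_rel n sm act M"
proof -
  obtain k :: nat and a m where v_eq: "v = (\<Sum>i<k. sm (eps n (a i)) (m i) - act (a i) (m i))"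
    and am: "\<forall>i<k. a i \<in> PA n \<and> m i \<in> M"
    using v by (rule triv_relE)
  have "u + (\<Sum>i<j. sm (eps n (a i)) (m i) - act (a i) (m i)) \<in> triv_rel n sm act M" if "j \<le> k" for j
    using that
  proof (induction j)
    case (Suc j)
    then show ?case
      using triv_rel_add_generator[OF Suc.IH] am by (simp add: add.assoc)
  qed (simp add: u)
  then show ?thesis
    using v_eq by simp
qed

lemma triv_rel_sum:
  "(\<And>i. i \<in> A \<Longrightarrow> t i \<in> triv_rel n sm act M) \<Longrightarrow> (\<Sum>i\<in>A. t i) \<in> triv_rel n sm act M"
  by (induction A rule: infinite_finite_induct) (auto intro: triv_rel_zero triv_rel_add)

lemma triv_rel_uminus:
  assumes "u \<in> triv_rel n psmult (pmult n \<delta>) M"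
  shows "- u \<in> triv_rel n psmult (pmult n \<delta>) M"
proof -
  obtain k :: nat and a m where u: "u = (\<Sum>i<k. psmult (eps n (a i)) (m i) - pmult n \<delta> (a i) (m i))"
    and am: "\<forall>i<k. a i \<in> PA n \<and> m i \<in> M"
    using assms by (rule triv_relE)
  have "- u = (\<Sum>i<k. psmult (eps n (psmult (- 1) (a i))) (m i) - pmult n \<delta> (psmult (- 1) (a i)) (m i))"
    unfolding u sum_negf[symmetric] eps_psmult pmult_psmult_left
    by (intro sum.cong refl ext) (simp add: psmult_def)
  moreover have "\<forall>i<k. psmult (- 1) (a i) \<in> PA n \<and> m i \<in> M"
    using am by (simp add: PA_psmult)
  ultimately show ?thesis
    using triv_relI[of k "\<lambda>i. psmult (- 1) (a i)" n m M psmult "pmult n \<delta>"] by simp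
qed

lemma add_subgroup_triv_rel: "add_subgroup (triv_rel n psmult (pmult n \<delta>) M)"
  by (intro add_subgroupI triv_rel_zero triv_rel_add triv_rel_uminus)

lemma add_subgroup_sum: "add_subgroup M \<Longrightarrow> (\<And>i. i \<in> A \<Longrightarrow> t i \<in> M) \<Longrightarrow> (\<Sum>i\<in>A. t i) \<in> M"
  by (induction A rule: infinite_finite_induct) (auto intro: add_subgroup_zero add_subgroup_add)

lemma triv_rel_subset:
  assumes "add_subgroup M"
    and "\<And>\<alpha> \<mu>. \<alpha> \<in> PA n \<Longrightarrow> \<mu> \<in> M \<Longrightarrow> sm (eps n \<alpha>) \<mu> - act \<alpha> \<mu> \<in> M"
  shows "triv_rel n sm act M \<subseteq> M"
  using assms by (auto elim!: triv_relE intro!: add_subgroup_sum)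

lemma triv_rel_PA_subset: "triv_rel n psmult (pmult n \<delta>) (PA n) \<subseteq> PA n"
proof (rule triv_rel_subset)
  show "add_subgroup (PA n)"
    by (rule add_subgroup_left_submodule[OF left_submodule_PA])
  then show "psmult (eps n \<alpha>) \<mu> - pmult n \<delta> \<alpha> \<mu> \<in> PA n" if "\<alpha> \<in> PA n" "\<mu> \<in> PA n" for \<alpha> \<mu>
    using that left_submodule_PA[of n \<delta>] add_subgroup_diff unfolding left_submodule_def by blast
qed

lemma subset_triv_tensor: "J \<subseteq> triv_tensor n sm act M J"
  unfolding triv_tensor_def by (rule subset_setsum_left[OF triv_rel_zero])

lemma add_subgroup_triv_tensor:
  "add_subgroup J \<Longrightarrow> add_subgroup (triv_tensor n sm1 (pmult n \<delta>) (PA n) J)"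
  unfolding triv_tensor_def sm1_def by (rule add_subgroup_setsum[OF _ add_subgroup_triv_rel])

lemma triv_tensor_subset_PA: "J \<subseteq> PA n \<Longrightarrow> triv_tensor n sm1 (pmult n \<delta>) (PA n) J \<subseteq> PA n"
  unfolding triv_tensor_def sm1_def
  by (rule setsum_subset[OF add_subgroup_left_submodule[OF left_submodule_PA] _ triv_rel_PA_subset])

lemma triv_rel_map:
  assumes h: "\<And>u v. h (u - v) = h u - h v" and hM: "h ` M \<subseteq> M'"
    and h_sm: "\<And>r \<mu>. \<mu> \<in> M \<Longrightarrow> h (sm r \<mu>) = sm' r (h \<mu>)"
    and h_act: "\<And>\<alpha> \<mu>. \<alpha> \<in> PA n \<Longrightarrow> \<mu> \<in> M \<Longrightarrow> h (act \<alpha> \<mu>) = act' \<alpha> (h \<mu>)"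
  shows "h ` triv_rel n sm act M \<subseteq> triv_rel n sm' act' M'"
proof
  fix w
  assume "w \<in> h ` triv_rel n sm act M"
  then obtain u where u: "u \<in> triv_rel n sm act M" and w: "w = h u"
    by blast
  obtain k :: nat and a m where u_eq: "u = (\<Sum>i<k. sm (eps n (a i)) (m i) - act (a i) (m i))"
    and am: "\<forall>i<k. a i \<in> PA n \<and> m i \<in> M"
    using u by (rule triv_relE)
  have h0: "h 0 = 0"
    using h[of 0 0] by simp
  have h_add: "h (x + y) = h x + h y" for x y
    using h[of x "- y"] h[of 0 y] h0 by simp
  have h_sum: "h (\<Sum>i<j. f i) = (\<Sum>i<j. h (f i))" for j :: nat and f
    by (induction j) (simp_all add: h0 h_add)
  have "w = (\<Sum>i<k. h (sm (eps n (a i)) (m i) - act (a i) (m i)))"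
    unfolding w u_eq h_sum ..
  also have "\<dots> = (\<Sum>i<k. sm' (eps n (a i)) (h (m i)) - act' (a i) (h (m i)))"
    using am h h_sm h_act by (intro sum.cong) simp_all
  finally have "w = (\<Sum>i<k. sm' (eps n (a i)) (h (m i)) - act' (a i) (h (m i)))" .
  moreover have "\<forall>i<k. a i \<in> PA n \<and> h (m i) \<in> M'"
    using am hM by blast
  ultimately show "w \<in> triv_rel n sm' act' M'"
    using triv_relI[of k a n "\<lambda>i. h (m i)" M' sm' act'] by simp
qed

lemma triv_rel_Times_left:
  assumes "u \<in> triv_rel n psmult (pmult n \<delta>) A" "0 \<in> B"
  shows "(u, 0) \<in> triv_rel n sm2 (act2 n \<delta>) (A \<times> B)"
proof -
  have "(\<lambda>u. (u, 0)) ` triv_rel n psmult (pmult n \<delta>) A \<subseteq> triv_rel n sm2 (act2 n \<delta>) (A \<times> B)"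
    using assms(2) by (intro triv_rel_map) (auto simp: sm2_def act2_def psmult_zero_right pmult_zero_right)
  then show ?thesis
    using assms(1) by blast
qed

lemma triv_rel_Times_right:
  assumes "u \<in> triv_rel n psmult (pmult n \<delta>) B" "0 \<in> A"
  shows "(0, u) \<in> triv_rel n sm2 (act2 n \<delta>) (A \<times> B)"
proof -
  have "(\<lambda>u. (0, u)) ` triv_rel n psmult (pmult n \<delta>) B \<subseteq> triv_rel n sm2 (act2 n \<delta>) (A \<times> B)"
    using assms(2) by (intro triv_rel_map) (auto simp: sm2_def act2_def psmult_zero_right pmult_zero_right)
  then show ?thesis
    using assms(1) by blast
qed

text \<open>Writing \<open>\<epsilon>\<close> for \<open>eps n\<close>: with \<open>a = - c d\<close> and \<open>m = \<epsilon>(a) e\<close>, the relations give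
  \<open>(\<epsilon>(a) e - a e) + (\<epsilon>(e) m - e m) = \<epsilon>(a) e + c d - 0 - \<epsilon>(a) e = c d\<close>,
  using \<open>d e = d\<close>, \<open>e e = e\<close> and \<open>\<epsilon>(e) = 0\<close>.\<close>

lemma basis_vec_mem_triv_rel:
  fixes \<delta> :: "'r::comm_ring_1"
  assumes d: "d \<in> diagrams n" and e: "e \<in> diagrams n"
    and de: "compose n d e = d" "middle_count n d e = 0"
    and ee: "compose n e e = e" "middle_count n e e = 0"
    and not_perm: "\<not> perm_diagram n e" and eM: "\<And>r. psmult r (basis_vec e) \<in> M"
  shows "psmult c (basis_vec d) \<in> triv_rel n psmult (pmult n \<delta>) M"
proof -
  define a :: "int set set \<Rightarrow> 'r" where "a = psmult (- c) (basis_vec d)"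
  define m :: "int set set \<Rightarrow> 'r" where "m = psmult (eps n a) (basis_vec e)"
  have PA: "psmult r (basis_vec d') \<in> PA n" if "d' \<in> diagrams n" for r and d'
    unfolding PA_eq_span_of by (rule psmult_basis_vec_mem_span_of[OF that that])
  have rel1: "psmult (eps n a) (psmult 1 (basis_vec e)) - pmult n \<delta> a (psmult 1 (basis_vec e))
      \<in> triv_rel n psmult (pmult n \<delta>) M"
    by (rule triv_rel_generator) (use d PA eM in \<open>simp_all add: a_def\<close>)
  have rel2: "psmult (eps n (psmult 1 (basis_vec e))) m - pmult n \<delta> (psmult 1 (basis_vec e)) m
      \<in> triv_rel n psmult (pmult n \<delta>) M"
    by (rule triv_rel_generator) (use e PA eM in \<open>simp_all add: m_def\<close>)
  have ae: "pmult n \<delta> a (psmult 1 (basis_vec e)) = psmult (- c) (basis_vec d)"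
    unfolding a_def pmult_basis_vec[OF d e] de by simp
  have em: "pmult n \<delta> (psmult 1 (basis_vec e)) m = psmult (eps n a) (basis_vec e)"
    unfolding m_def pmult_basis_vec[OF e e] ee by simp
  have "psmult (eps n a) (psmult 1 (basis_vec e)) - psmult (- c) (basis_vec d)
      + (psmult 0 m - psmult (eps n a) (basis_vec e)) \<in> triv_rel n psmult (pmult n \<delta>) M"
    using triv_rel_add[OF rel1 rel2] unfolding ae em eps_basis_vec[OF not_perm] .
  moreover have "psmult (eps n a) (psmult 1 (basis_vec e)) - psmult (- c) (basis_vec d)
      + (psmult 0 m - psmult (eps n a) (basis_vec e)) = psmult c (basis_vec d)"
    by (simp add: psmult_def fun_eq_iff)
  ultimately show ?thesis
    by simp
qed

lemma span_of_subset_triv_rel: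
  fixes \<delta> :: "'r::comm_ring_1"
  assumes S: "S \<subseteq> diagrams n"
    and basis: "\<And>d c. d \<in> S \<Longrightarrow> psmult c (basis_vec d) \<in> triv_rel n psmult (pmult n \<delta>) M"
  shows "span_of n S \<subseteq> triv_rel n psmult (pmult n \<delta>) M"
proof
  fix f :: "int set set \<Rightarrow> 'r"
  assume "f \<in> span_of n S"
  then have "f = (\<Sum>d\<in>S. psmult (f d) (basis_vec d))"
    by (rule span_of_eq_sum_basis_vec[OF S])
  also have "\<dots> \<in> triv_rel n psmult (pmult n \<delta>) M"
    by (rule triv_rel_sum) (rule basis)
  finally show "f \<in> triv_rel n psmult (pmult n \<delta>) M" .
qed

lemma Times_subset_triv_rel:
  assumes "A \<subseteq> triv_rel n psmult (pmult n \<delta>) A" "B \<subseteq> triv_rel n psmult (pmult n \<delta>) B"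
    and "0 \<in> A" "0 \<in> B"
  shows "A \<times> B \<subseteq> triv_rel n sm2 (act2 n \<delta>) (A \<times> B)"
proof
  fix p
  assume "p \<in> A \<times> B"
  then have "fst p \<in> triv_rel n psmult (pmult n \<delta>) A" "snd p \<in> triv_rel n psmult (pmult n \<delta>) B"
    using assms(1,2) by auto
  then have "(fst p, 0) \<in> triv_rel n sm2 (act2 n \<delta>) (A \<times> B)"
    and "(0, snd p) \<in> triv_rel n sm2 (act2 n \<delta>) (A \<times> B)"
    using triv_rel_Times_left[OF _ assms(4)] triv_rel_Times_right[OF _ assms(3)] by blast+
  then have "(fst p, 0) + (0, snd p) \<in> triv_rel n sm2 (act2 n \<delta>) (A \<times> B)"
    by (rule triv_rel_add)
  then show "p \<in> triv_rel n sm2 (act2 n \<delta>) (A \<times> B)"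
    by simp
qed

lemma triv_tensor_Times_eq:
  fixes \<delta> :: "'r::comm_ring_1"
  assumes A: "left_submodule n \<delta> A" and B: "left_submodule n \<delta> B"
    and A_rel: "A \<subseteq> triv_rel n psmult (pmult n \<delta>) A"
    and B_rel: "B \<subseteq> triv_rel n psmult (pmult n \<delta>) B"
    and N: "N \<subseteq> A \<times> B" "0 \<in> N"
  shows "triv_tensor n sm2 (act2 n \<delta>) (A \<times> B) N = A \<times> B"
proof -
  let ?R = "triv_rel n sm2 (act2 n \<delta>) (A \<times> B)"
  have sA: "add_subgroup A" and sB: "add_subgroup B"
    using add_subgroup_left_submodule[OF A] add_subgroup_left_submodule[OF B] .
  have AB: "add_subgroup (A \<times> B)"
    using sA sB by (rule add_subgroup_Times)
  have "?R \<subseteq> A \<times> B"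
  proof (rule triv_rel_subset[OF AB])
    fix \<alpha> :: "int set set \<Rightarrow> 'r" and \<mu>
    assume "\<alpha> \<in> PA n" "\<mu> \<in> A \<times> B"
    then have "psmult (eps n \<alpha>) (fst \<mu>) - pmult n \<delta> \<alpha> (fst \<mu>) \<in> A"
      and "psmult (eps n \<alpha>) (snd \<mu>) - pmult n \<delta> \<alpha> (snd \<mu>) \<in> B"
      using A B add_subgroup_diff[OF sA] add_subgroup_diff[OF sB]
      unfolding left_submodule_def by auto
    then show "sm2 (eps n \<alpha>) \<mu> - act2 n \<delta> \<alpha> \<mu> \<in> A \<times> B"
      unfolding sm2_def act2_def by simp
  qed
  moreover have "A \<times> B \<subseteq> ?R"
    using Times_subset_triv_rel[OF A_rel B_rel add_subgroup_zero[OF sA] add_subgroup_zero[OF sB]] .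
  ultimately have "?R = A \<times> B"
    by blast
  then show ?thesis
    unfolding triv_tensor_def using setsum_absorb_right[OF AB N] by simp
qed

section \<open>The modules \<open>A\<^sub>x\<close>, \<open>B\<^sub>X\<^sub>,\<^sub>x\<close> and \<open>J\<^sub>Z\<close>\<close>

definition Adiags :: "nat \<Rightarrow> int \<Rightarrow> int set set set" where
  "Adiags n x = {d \<in> diagrams n. {x} \<in> d}"

definition Bdiags :: "nat \<Rightarrow> int set \<Rightarrow> int \<Rightarrow> int set set set" where
  "Bdiags n X x = {d \<in> diagrams n. \<exists>y\<in>X. y \<noteq> x \<and> (\<exists>Bl\<in>d. x \<in> Bl \<and> y \<in> Bl)}"

lemma Amod_eq_span_of: "Amod n x = span_of n (Adiags n x)"
  unfolding Amod_def Adiags_def ..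

lemma Bmod_eq_span_of: "Bmod n X x = span_of n (Bdiags n X x)"
  unfolding Bmod_def Bdiags_def ..

lemma Adiags_Bdiags_disjoint: "Adiags n x \<inter> Bdiags n X x = {}"
  unfolding Adiags_def Bdiags_def using diagram_block_unique by fastforce

lemma Jdiags_subset_Un:
  assumes "x \<in> X"
  shows "Jdiags n X \<subseteq> (Adiags n x \<union> Bdiags n X x) \<union> Jdiags n (X - {x})"
proof
  fix d
  assume d: "d \<in> Jdiags n X"
  then consider z where "z \<in> X" "{z} \<in> d"
    | z1 z2 Bl where "z1 \<in> X" "z2 \<in> X" "z1 \<noteq> z2" "Bl \<in> d" "z1 \<in> Bl" "z2 \<in> Bl"
    unfolding Jdiags_def by blast
  then show "d \<in> (Adiags n x \<union> Bdiags n X x) \<union> Jdiags n (X - {x})"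
  proof cases
    case 1
    then show ?thesis
      using d unfolding Adiags_def Jdiags_def by (cases "z = x") auto
  next
    case 2
    then show ?thesis
      using d unfolding Bdiags_def Jdiags_def by (cases "z1 = x"; cases "z2 = x") blast+
  qed
qed

lemma Jdiags_mono: "Z \<subseteq> Z' \<Longrightarrow> Jdiags n Z \<subseteq> Jdiags n Z'"
  unfolding Jdiags_def by blast

lemma Adiags_subset_Jdiags: "x \<in> X \<Longrightarrow> Adiags n x \<subseteq> Jdiags n X"
  unfolding Adiags_def Jdiags_def by blast

lemma Bdiags_subset_Jdiags: "x \<in> X \<Longrightarrow> Bdiags n X x \<subseteq> Jdiags n X"
  unfolding Bdiags_def Jdiags_def by blast

lemma left_submodule_Amod:
  "0 < x \<Longrightarrow> left_submodule n \<delta> (Amod n x)"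
  unfolding Amod_eq_span_of Adiags_def
  by (rule left_submodule_span_of) (auto intro: compose_diagram compose_right_singleton)

lemma left_submodule_Bmod:
  assumes "\<And>z. z \<in> X \<Longrightarrow> 0 < z" "0 < x"
  shows "left_submodule n \<delta> (Bmod n X x)"
  unfolding Bmod_eq_span_of
proof (rule left_submodule_span_of)
  fix d1 d2
  assume d1: "d1 \<in> diagrams n" and "d2 \<in> Bdiags n X x"
  then obtain y Bl where "d2 \<in> diagrams n" "y \<in> X" "y \<noteq> x" "Bl \<in> d2" "x \<in> Bl" "y \<in> Bl"
    unfolding Bdiags_def by blast
  then show "compose n d1 d2 \<in> Bdiags n X x"
    using compose_right_same_block[of d2 n Bl x y d1] compose_diagram[OF d1] assms
    unfolding Bdiags_def by blast
qed (auto simp: Bdiags_def)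

lemma left_submodule_Jid:
  assumes "\<And>z. z \<in> Z \<Longrightarrow> 0 < z"
  shows "left_submodule n \<delta> (Jid n Z)"
  unfolding Jid_def
proof (rule left_submodule_span_of)
  fix d1 d2
  assume d1: "d1 \<in> diagrams n" and d2: "d2 \<in> Jdiags n Z"
  then have d2': "d2 \<in> diagrams n"
    unfolding Jdiags_def by blast
  have d12: "compose n d1 d2 \<in> diagrams n"
    using compose_diagram[OF d1 d2'] .
  from d2 consider z where "z \<in> Z" "{z} \<in> d2"
    | z1 z2 Bl where "z1 \<in> Z" "z2 \<in> Z" "z1 \<noteq> z2" "Bl \<in> d2" "z1 \<in> Bl" "z2 \<in> Bl"
    unfolding Jdiags_def by blast
  then show "compose n d1 d2 \<in> Jdiags n Z"
  proof cases
    case 1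
    then have "{z} \<in> compose n d1 d2"
      using compose_right_singleton[OF d2'] assms by blast
    then show ?thesis
      using d12 1(1) unfolding Jdiags_def by blast
  next
    case 2
    then obtain Bl' where "Bl' \<in> compose n d1 d2" "z1 \<in> Bl'" "z2 \<in> Bl'"
      using compose_right_same_block[OF d2' 2(4-6)] assms by blast
    then show ?thesis
      using d12 2(1-3) unfolding Jdiags_def by blast
  qed
qed (auto simp: Jdiags_def)

lemma Amod_Bmod_add_mem_Jid:
  assumes "a \<in> Amod n x" "b \<in> Bmod n X x" "a + b \<in> Jid n Z"
  shows "a \<in> Jid n Z" "b \<in> Jid n Z"
proof -
  have AB: "Adiags n x \<inter> Bdiags n X x = {}" "Bdiags n X x \<inter> Adiags n x = {}"
    using Adiags_Bdiags_disjoint by blast+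
  show "a \<in> Jid n Z"
    using span_of_add_disjoint[OF AB(1)] assms unfolding Amod_eq_span_of Bmod_eq_span_of Jid_def by blast
  show "b \<in> Jid n Z"
    using span_of_add_disjoint[OF AB(2), of b n a] assms
    unfolding Amod_eq_span_of Bmod_eq_span_of Jid_def by (simp add: add.commute)
qed

lemma Jid_decompose:
  assumes "x \<in> X" "f \<in> Jid n X"
  obtains a b j where "a \<in> Amod n x" "b \<in> Bmod n X x" "j \<in> Jid n (X - {x})" "f = a + b + j"
proof -
  have "Jid n X \<subseteq> span_of n ((Adiags n x \<union> Bdiags n X x) \<union> Jdiags n (X - {x}))"
    unfolding Jid_def by (rule span_of_mono[OF Jdiags_subset_Un[OF assms(1)]])
  also have "\<dots> \<subseteq> setsum (span_of n (Adiags n x \<union> Bdiags n X x)) (Jid n (X - {x}))"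
    unfolding Jid_def by (rule span_of_Un_subset_setsum)
  also have "\<dots> \<subseteq> setsum (setsum (Amod n x) (Bmod n X x)) (Jid n (X - {x}))"
    unfolding Amod_eq_span_of Bmod_eq_span_of by (intro setsum_mono_left span_of_Un_subset_setsum)
  finally have "f \<in> setsum (setsum (Amod n x) (Bmod n X x)) (Jid n (X - {x}))"
    using assms(2) by blast
  then obtain u j where u: "u \<in> setsum (Amod n x) (Bmod n X x)" and "j \<in> Jid n (X - {x})" "f = u + j"
    by (rule setsumE)
  moreover obtain a b where "a \<in> Amod n x" "b \<in> Bmod n X x" "u = a + b"
    using u by (rule setsumE)
  ultimately show ?thesis
    using that by blast
qed

lemma Amod_subset_Jid: "x \<in> X \<Longrightarrow> Amod n x \<subseteq> Jid n X"
  unfolding Amod_eq_span_of Jid_def by (intro span_of_mono Adiags_subset_Jdiags)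

lemma Bmod_subset_Jid: "x \<in> X \<Longrightarrow> Bmod n X x \<subseteq> Jid n X"
  unfolding Bmod_eq_span_of Jid_def by (intro span_of_mono Bdiags_subset_Jdiags)

lemma Jid_mono: "Z \<subseteq> Z' \<Longrightarrow> Jid n Z \<subseteq> Jid n Z'"
  unfolding Jid_def by (intro span_of_mono Jdiags_mono)

lemma sum_image_Amod_Bmod_subset_Jid:
  assumes "x \<in> X"
  shows "(\<lambda>p. fst p + snd p) ` (Amod n x \<times> Bmod n X x) \<subseteq> Jid n X"
proof -
  have "add_subgroup (Jid n X)"
    unfolding Jid_def by (rule add_subgroup_span_of)
  then show ?thesis
    using Amod_subset_Jid[OF assms] Bmod_subset_Jid[OF assms] add_subgroup_add
    by (fastforce simp: subset_iff)
qed

lemma Jid_exact: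
  assumes "X \<subseteq> {1 .. int n}" "x \<in> X"
  defines "A \<equiv> Amod n x :: (int set set \<Rightarrow> 'r::comm_ring_1) set" and "B \<equiv> Bmod n X x"
    and "J' \<equiv> Jid n (X - {x})"
  shows "short_exact_quot (A \<times> B) ((A \<inter> J') \<times> (B \<inter> J')) (\<lambda>p. fst p + snd p) (PA n) J' (Jid n X)"
proof -
  have sA: "add_subgroup A" and sB: "add_subgroup B" and sJ': "add_subgroup J'"
    and sJX: "add_subgroup (Jid n X :: (int set set \<Rightarrow> 'r) set)"
    unfolding A_def B_def J'_def Amod_eq_span_of Bmod_eq_span_of Jid_def
    by (rule add_subgroup_span_of)+
  have J'JX: "J' \<subseteq> Jid n X"
    unfolding J'_def by (rule Jid_mono) blast
  show ?thesis
  proof (rule short_exact_quotI[OF add_subgroup_Times[OF sA sB]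
        add_subgroup_Times[OF add_subgroup_Int[OF sA sJ'] add_subgroup_Int[OF sB sJ']] sJ' sJX J'JX])
    show "Jid n X \<subseteq> PA n"
      unfolding Jid_def by (rule span_of_subset_PA)
    show "(\<lambda>p. fst p + snd p) ` (A \<times> B) \<subseteq> Jid n X"
      unfolding A_def B_def by (rule sum_image_Amod_Bmod_subset_Jid[OF assms(2)])
    show "(\<lambda>p. fst p + snd p) ` ((A \<inter> J') \<times> (B \<inter> J')) \<subseteq> J'"
      using add_subgroup_add[OF sJ'] by auto
  next
    fix m
    assume "m \<in> A \<times> B" "fst m + snd m \<in> J'"
    then show "m \<in> (A \<inter> J') \<times> (B \<inter> J')"
      using Amod_Bmod_add_mem_Jid unfolding A_def B_def J'_def by (cases m) auto
  next
    fix f :: "int set set \<Rightarrow> 'r"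
    assume "f \<in> Jid n X"
    then obtain a b j where "a \<in> A" "b \<in> B" "j \<in> J'" "f = a + b + j"
      using Jid_decompose[OF assms(2)] unfolding A_def B_def J'_def by metis
    then show "\<exists>m\<in>A \<times> B. fst m + snd m - f \<in> J'"
      using add_subgroup_uminus[OF sJ'] by force
  qed simp
qed

lemma Amod_subset_triv_rel:
  fixes \<delta> :: "'r::comm_ring_1"
  assumes "2 \<le> n" "x \<in> {1 .. int n}" "Amod n x \<subseteq> M"
  shows "Amod n x \<subseteq> triv_rel n psmult (pmult n \<delta>) M"
  unfolding Amod_eq_span_of
proof (rule span_of_subset_triv_rel)
  define y where "y = (if x = 1 then 2 else (1::int))"
  have xy: "x \<in> {1 .. int n}" "y \<in> {1 .. int n}" "x \<noteq> y"
    using assms(1,2) unfolding y_def by auto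
  let ?e = "singleton_idem n x y"
  have e: "?e \<in> diagrams n" and ex: "{x} \<in> ?e"
    using singleton_idem_diagram[OF xy] by (simp_all add: singleton_idem_def)
  fix d c
  assume "d \<in> Adiags n x"
  then have d: "d \<in> diagrams n" and dx: "{x} \<in> d"
    unfolding Adiags_def by blast+
  show "psmult c (basis_vec d) \<in> triv_rel n psmult (pmult n \<delta>) M"
  proof (rule basis_vec_mem_triv_rel[OF d e])
    show "compose n d ?e = d" "middle_count n d ?e = 0"
      using compose_singleton_idem[OF d dx xy] by simp_all
    show "compose n ?e ?e = ?e" "middle_count n ?e ?e = 0"
      using compose_singleton_idem[OF e ex xy] by simp_all
    show "\<not> perm_diagram n ?e"
      using perm_diagram_no_singleton ex by blast
    show "psmult r (basis_vec ?e) \<in> M" for r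
      using assms(3) psmult_basis_vec_mem_span_of[of ?e "Adiags n x"] e ex
      unfolding Amod_eq_span_of Adiags_def by blast
  qed
qed (auto simp: Adiags_def)

lemma Bmod_subset_triv_rel:
  fixes \<delta> :: "'r::comm_ring_1"
  assumes "X \<subseteq> {1 .. int n}" "x \<in> X" "Bmod n X x \<subseteq> M"
  shows "Bmod n X x \<subseteq> triv_rel n psmult (pmult n \<delta>) M"
  unfolding Bmod_eq_span_of
proof (rule span_of_subset_triv_rel)
  fix d c
  assume "d \<in> Bdiags n X x"
  then obtain y B0 where d: "d \<in> diagrams n" and y: "y \<in> X" "y \<noteq> x"
    and B0: "B0 \<in> d" "x \<in> B0" "y \<in> B0"
    unfolding Bdiags_def by blast
  have xy: "x \<in> {1 .. int n}" "y \<in> {1 .. int n}" "x \<noteq> y"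
    using assms(1,2) y by auto
  let ?e = "joined_idem n x y"
  have e: "?e \<in> diagrams n"
    by (rule joined_idem_diagram[OF xy])
  have through: "{- y, y, x} \<in> ?e" and single: "{- x} \<in> ?e"
    unfolding joined_idem_def by simp_all
  have "x \<in> {- y, y, x}" "y \<in> {- y, y, x}"
    by simp_all
  note ee = compose_joined_idem[OF e through this xy]
  have "\<exists>Bl\<in>?e. x \<in> Bl \<and> y \<in> Bl"
    using through by (intro bexI[of _ "{- y, y, x}"]) simp_all
  then have "?e \<in> Bdiags n X x"
    unfolding Bdiags_def using e y(1,2) by blast
  show "psmult c (basis_vec d) \<in> triv_rel n psmult (pmult n \<delta>) M"
  proof (rule basis_vec_mem_triv_rel[OF d e])
    show "compose n d ?e = d" "middle_count n d ?e = 0"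
      using compose_joined_idem[OF d B0 xy] by simp_all
    show "compose n ?e ?e = ?e" "middle_count n ?e ?e = 0"
      using ee by simp_all
    show "\<not> perm_diagram n ?e"
      using perm_diagram_no_singleton single by blast
    show "psmult r (basis_vec ?e) \<in> M" for r
      using assms(3) psmult_basis_vec_mem_span_of[OF \<open>?e \<in> Bdiags n X x\<close> e]
      unfolding Bmod_eq_span_of by blast
  qed
qed (auto simp: Bdiags_def)

lemma triv_tensor_Jid_eq:
  fixes \<delta> :: "'r::comm_ring_1"
  assumes "2 \<le> n" "X \<subseteq> {1 .. int n}" "x \<in> X"
  shows "triv_tensor n sm1 (pmult n \<delta>) (PA n) (Jid n X :: (int set set \<Rightarrow> 'r) set)
    = triv_tensor n sm1 (pmult n \<delta>) (PA n) (Jid n (X - {x}))"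
  unfolding triv_tensor_def sm1_def
proof (rule setsum_absorb_left)
  let ?R = "triv_rel n psmult (pmult n \<delta>) (PA n :: (int set set \<Rightarrow> 'r) set)"
  show "add_subgroup (Jid n (X - {x}) :: (int set set \<Rightarrow> 'r) set)"
    unfolding Jid_def by (rule add_subgroup_span_of)
  show "add_subgroup ?R"
    by (rule add_subgroup_triv_rel)
  show "Jid n (X - {x}) \<subseteq> Jid n X"
    by (rule Jid_mono) blast
  show "Jid n X \<subseteq> setsum (Jid n (X - {x})) ?R"
  proof
    fix f :: "int set set \<Rightarrow> 'r"
    assume "f \<in> Jid n X"
    then obtain a b j where ab: "a \<in> Amod n x" "b \<in> Bmod n X x"
      and j: "j \<in> Jid n (X - {x})" and f: "f = a + b + j"
      by (rule Jid_decompose[OF assms(3)])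
    have x: "x \<in> {1 .. int n}"
      using assms(2,3) by blast
    have "Amod n x \<subseteq> ?R"
      using Amod_subset_triv_rel[OF assms(1) x] span_of_subset_PA
      unfolding Amod_eq_span_of by blast
    moreover have "Bmod n X x \<subseteq> ?R"
      using Bmod_subset_triv_rel[OF assms(2,3)] span_of_subset_PA
      unfolding Bmod_eq_span_of by blast
    ultimately have "a + b \<in> ?R"
      using ab triv_rel_add by blast
    then show "f \<in> setsum (Jid n (X - {x})) ?R"
      unfolding mem_setsum_iff f using j by (metis add.commute)
  qed
qed

lemma triv_tensor_Amod_Bmod_eq:
  fixes \<delta> :: "'r::comm_ring_1"
  assumes "2 \<le> n" "X \<subseteq> {1 .. int n}" "x \<in> X" "N \<subseteq> Amod n x \<times> Bmod n X x" "0 \<in> N"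
  shows "triv_tensor n sm2 (act2 n \<delta>) (Amod n x \<times> Bmod n X x) N = Amod n x \<times> Bmod n X x"
proof (rule triv_tensor_Times_eq)
  show "left_submodule n \<delta> (Amod n x)"
    using assms(2,3) by (intro left_submodule_Amod) auto
  show "left_submodule n \<delta> (Bmod n X x)"
    using assms(2,3) by (intro left_submodule_Bmod) auto
  show "Amod n x \<subseteq> triv_rel n psmult (pmult n \<delta>) (Amod n x)"
    using assms(1-3) by (intro Amod_subset_triv_rel) auto
  show "Bmod n X x \<subseteq> triv_rel n psmult (pmult n \<delta>) (Bmod n X x)"
    using assms(2,3) by (rule Bmod_subset_triv_rel) simp
qed (use assms(4,5) in simp_all)

lemma triv_tensor_exact:
  fixes \<delta> :: "'r::comm_ring_1"
  assumes "2 \<le> n" "X \<subseteq> {1 .. int n}" "x \<in> X"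
  defines "A \<equiv> Amod n x :: (int set set \<Rightarrow> 'r) set" and "B \<equiv> Bmod n X x"
    and "J' \<equiv> Jid n (X - {x})" and "T \<equiv> triv_tensor n sm1 (pmult n \<delta>) (PA n)"
  shows "short_exact_quot (A \<times> B) (triv_tensor n sm2 (act2 n \<delta>) (A \<times> B) ((A \<inter> J') \<times> (B \<inter> J')))
    (\<lambda>p. fst p + snd p) (PA n) (T J') (T (Jid n X))"
proof -
  have sA: "add_subgroup A" and sB: "add_subgroup B" and sJ': "add_subgroup J'"
    unfolding A_def B_def J'_def Amod_eq_span_of Bmod_eq_span_of Jid_def
    by (rule add_subgroup_span_of)+
  have "triv_tensor n sm2 (act2 n \<delta>) (A \<times> B) ((A \<inter> J') \<times> (B \<inter> J')) = A \<times> B"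
    unfolding A_def B_def
    by (rule triv_tensor_Amod_Bmod_eq[OF assms(1-3)])
      (use sA sB sJ' add_subgroup_zero in \<open>auto simp: A_def B_def J'_def zero_prod_def\<close>)
  moreover have TX: "T (Jid n X) = T J'"
    unfolding T_def J'_def by (rule triv_tensor_Jid_eq[OF assms(1-3)])
  moreover have "short_exact_quot (A \<times> B) (A \<times> B) (\<lambda>p. fst p + snd p) (PA n) (T J') (T J')"
  proof (rule short_exact_quot_self)
    show "add_subgroup (A \<times> B)"
      using sA sB by (rule add_subgroup_Times)
    show "add_subgroup (T J')"
      unfolding T_def using sJ' by (rule add_subgroup_triv_tensor)
    show "T J' \<subseteq> PA n"
      unfolding T_def J'_def Jid_def by (rule triv_tensor_subset_PA[OF span_of_subset_PA])
    have "(\<lambda>p. fst p + snd p) ` (A \<times> B) \<subseteq> Jid n X"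
      unfolding A_def B_def by (rule sum_image_Amod_Bmod_subset_Jid[OF assms(3)])
    also have "\<dots> \<subseteq> T (Jid n X)"
      unfolding T_def by (rule subset_triv_tensor)
    finally show "(\<lambda>p. fst p + snd p) ` (A \<times> B) \<subseteq> T J'"
      unfolding TX .
  qed simp
  ultimately show ?thesis
    by simp
qed

theorem proposition4p6:
  fixes n :: nat and \<delta> :: "'r::comm_ring_1" and X :: "int set" and x :: int
  assumes "n \<ge> 2" and "X \<subseteq> {1 .. int n}" and "x \<in> X"
  defines "P \<equiv> (PA n :: (int set set \<Rightarrow> 'r) set)"
      and "J' \<equiv> (Jid n (X - {x}) :: (int set set \<Rightarrow> 'r) set)"
      and "JX \<equiv> (Jid n X :: (int set set \<Rightarrow> 'r) set)"
      and "A \<equiv> (Amod n x :: (int set set \<Rightarrow> 'r) set)"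
      and "B \<equiv> (Bmod n X x :: (int set set \<Rightarrow> 'r) set)"
  defines "M1 \<equiv> A \<times> B" and "N1 \<equiv> (A \<inter> J') \<times> (B \<inter> J')"
      and "g \<equiv> (\<lambda>p. fst p + snd p)"
  shows
    "left_submodule n \<delta> A \<and> left_submodule n \<delta> B \<and> left_submodule n \<delta> J' \<and> left_submodule n \<delta> JX \<and>
    inj_on (induced g J') (quot M1 N1) \<and>
    induced g J' ` quot M1 N1 = {C \<in> quot P J'. induced id JX C = JX} \<and>
    induced id JX ` quot P J' = quot P JX \<and>
    inj_on (induced g (triv_tensor n sm1 (pmult n \<delta>) P J'))
            (quot M1 (triv_tensor n sm2 (act2 n \<delta>) M1 N1)) \<and>
    induced g (triv_tensor n sm1 (pmult n \<delta>) P J') ` quot M1 (triv_tensor n sm2 (act2 n \<delta>) M1 N1)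
       = {C \<in> quot P (triv_tensor n sm1 (pmult n \<delta>) P J').
            induced id (triv_tensor n sm1 (pmult n \<delta>) P JX) C = triv_tensor n sm1 (pmult n \<delta>) P JX} \<and>
    induced id (triv_tensor n sm1 (pmult n \<delta>) P JX) ` quot P (triv_tensor n sm1 (pmult n \<delta>) P J')
       = quot P (triv_tensor n sm1 (pmult n \<delta>) P JX)"
proof -
  have pos: "\<And>z. z \<in> X \<Longrightarrow> 0 < z"
    using assms(2) by auto
  have "left_submodule n \<delta> A" "left_submodule n \<delta> B" "left_submodule n \<delta> J'" "left_submodule n \<delta> JX"
    unfolding A_def B_def J'_def JX_def using pos assms(3)
    by (auto intro: left_submodule_Amod left_submodule_Bmod left_submodule_Jid)
  moreover have "short_exact_quot M1 N1 g P J' JX"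
    unfolding M1_def N1_def g_def P_def J'_def JX_def A_def B_def using Jid_exact[OF assms(2,3)] .
  moreover have "short_exact_quot M1 (triv_tensor n sm2 (act2 n \<delta>) M1 N1) g P
      (triv_tensor n sm1 (pmult n \<delta>) P J') (triv_tensor n sm1 (pmult n \<delta>) P JX)"
    unfolding M1_def N1_def g_def P_def J'_def JX_def A_def B_def using triv_tensor_exact[OF assms(1-3)] .
  ultimately show ?thesis
    unfolding short_exact_quot_def by (elim conjE) (intro conjI; assumption)
qed

end
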